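(* Let $\Phi\in\mathit{NCB}_{\mathcal D}(\mathcal B(\mathcal H))$ with symbol $\Gamma(\Phi)=[\phi]$. Suppose $\{R_j\}_{j\ge1}$ and $\{C_j\}_{j\ge1}$ are two countable Borel partitions of $X$ such that $\phi^{-1}(\mathbb C\setminus\{0\})\subseteq\bigcup_{j\ge1}R_j\times C_j$. For each $j$ let $\Phi_j\in\mathit{NCB}_{\mathcal D}(\mathcal B(\mathcal H))$ be the map with $\Gamma(\Phi_j)=[\chi_{R_j\times C_j}\cdot\phi]$. Then $\|\Phi\|=\sup_j\|\Phi_j\|$.
   Context: $(X,\mu)$ is a standard finite measure space, $\mathcal H=L^2(X,\mu)$, and $\mathcal D=L^\infty(X,\mu)$ acting by multiplication (a masa in $\mathcal B(\mathcal H)$). $\mathit{NCB}_{\mathcal D}(\mathcal B(\mathcal H))$ is the set of normal completely bounded linear maps $\mathcal B(\mathcal H)\to\mathcal B(\mathcal H)$ that are $\mathcal D$-bimodule maps. A set $E\subseteq X\times X$ is marginally null if $E\subseteq (N\times X)\cup(X\times N)$ for a $\mu$-null $N$; Borel functions on $X\times X$ are identified if they agree off a marginally null set, $[\phi]$ denoting the class of $\phi$. There is a bijection $\Gamma$ from $\mathit{NCB}_{\mathcal D}(\mathcal B(\mathcal H))$ onto the classes $[\langle f,g\rangle]$, $f,g\in L^\infty(X,\ell^2)$ (where $\langle f,g\rangle(s,t)=\langle f(s),g(t)\rangle$), such that for $\phi\in\Gamma(\Phi)$ the map $\Phi$ is the normal extension to $\mathcal B(\mathcal H)$ of the map sending a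 Hilbert–Schmidt operator with integral kernel $k$ to the one with kernel $\phi k$; $\Gamma(\Phi)$ is called the symbol of $\Phi$. $\chi_S$ is the indicator function of $S$. *)

theory Defs
  imports "HOL-Analysis.Analysis"
begin

text \<open>Concrete model of H = L^2(X,mu): vectors are functions X => complex that are
square integrable; vectors agreeing mu-a.e. are identified. Operators are maps on
such functions; B(H) is modelled by bounded, linear, a.e.-respecting operators,
and two operators are identified if they agree (a.e.) on every vector.\<close>

definition L2 :: "'a measure \<Rightarrow> ('a \<Rightarrow> complex) set" where
  "L2 M = {f. f \<in> borel_measurable M \<and> integrable M (\<lambda>x. (cmod (f x))\<^sup>2)}"

definition l2inner :: "'a measure \<Rightarrow> ('a \<Rightarrow> complex) \<Rightarrow> ('a \<Rightarrow> complex) \<Rightarrow> complex" where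
  "l2inner M f g = (LINT x|M. f x * cnj (g x))"

definition l2norm :: "'a measure \<Rightarrow> ('a \<Rightarrow> complex) \<Rightarrow> real" where
  "l2norm M f = sqrt (LINT x|M. (cmod (f x))\<^sup>2)"

definition ae_eq :: "'a measure \<Rightarrow> ('a \<Rightarrow> complex) \<Rightarrow> ('a \<Rightarrow> complex) \<Rightarrow> bool" where
  "ae_eq M f g \<longleftrightarrow> (AE x in M. f x = g x)"

type_synonym 'a op = "('a \<Rightarrow> complex) \<Rightarrow> ('a \<Rightarrow> complex)"

definition bop :: "'a measure \<Rightarrow> 'a op \<Rightarrow> bool" where
  "bop M T \<longleftrightarrow>
     (\<forall>f\<in>L2 M. T f \<in> L2 M) \<and>
     (\<forall>f\<in>L2 M. \<forall>g\<in>L2 M. ae_eq M f g \<longrightarrow> ae_eq M (T f) (T g)) \<and>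
     (\<forall>f\<in>L2 M. \<forall>g\<in>L2 M. \<forall>c::complex.
        ae_eq M (T (\<lambda>x. c * f x + g x)) (\<lambda>x. c * T f x + T g x)) \<and>
     (\<exists>C. \<forall>f\<in>L2 M. l2norm M (T f) \<le> C * l2norm M f)"

definition op_eq :: "'a measure \<Rightarrow> 'a op \<Rightarrow> 'a op \<Rightarrow> bool" where
  "op_eq M S T \<longleftrightarrow> (\<forall>f\<in>L2 M. ae_eq M (S f) (T f))"

definition opnorm :: "'a measure \<Rightarrow> 'a op \<Rightarrow> real" where
  "opnorm M T = Sup {l2norm M (T f) | f. f \<in> L2 M \<and> l2norm M f \<le> 1}"

definition op_add :: "'a op \<Rightarrow> 'a op \<Rightarrow> 'a op" where
  "op_add S T = (\<lambda>f x. S f x + T f x)"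

definition op_scale :: "complex \<Rightarrow> 'a op \<Rightarrow> 'a op" where
  "op_scale c T = (\<lambda>f x. c * T f x)"

text \<open>Multiplication operator by a (in D = L^infinity).\<close>
definition mult_op :: "('a \<Rightarrow> complex) \<Rightarrow> 'a op" where
  "mult_op a = (\<lambda>f x. a x * f x)"

definition Linf :: "'a measure \<Rightarrow> ('a \<Rightarrow> complex) set" where
  "Linf M = {a. a \<in> borel_measurable M \<and> (\<exists>C. AE x in M. cmod (a x) \<le> C)}"

definition matnorm :: "'a measure \<Rightarrow> nat \<Rightarrow> (nat \<Rightarrow> nat \<Rightarrow> 'a op) \<Rightarrow> real" where
  "matnorm M n A = Sup {sqrt (\<Sum>i<n. (l2norm M (\<lambda>x. \<Sum>j<n. A i j (\<xi> j) x))\<^sup>2) | \<xi>.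
       (\<forall>j<n. \<xi> j \<in> L2 M) \<and> (\<Sum>j<n. (l2norm M (\<xi> j))\<^sup>2) \<le> 1}"

text \<open>Normal (ultraweakly continuous) linear functionals on B(H):
  T |-> sum_n <T xi_n, eta_n> with sum ||xi_n||^2, sum ||eta_n||^2 finite.\<close>
definition tc_pair :: "'a measure \<Rightarrow> (nat \<Rightarrow> 'a \<Rightarrow> complex) \<Rightarrow> (nat \<Rightarrow> 'a \<Rightarrow> complex) \<Rightarrow> bool" where
  "tc_pair M \<xi> \<eta> \<longleftrightarrow> (\<forall>n. \<xi> n \<in> L2 M \<and> \<eta> n \<in> L2 M) \<and>
      summable (\<lambda>n. (l2norm M (\<xi> n))\<^sup>2) \<and> summable (\<lambda>n. (l2norm M (\<eta> n))\<^sup>2)"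

definition tc_fun :: "'a measure \<Rightarrow> (nat \<Rightarrow> 'a \<Rightarrow> complex) \<Rightarrow> (nat \<Rightarrow> 'a \<Rightarrow> complex) \<Rightarrow> 'a op \<Rightarrow> complex" where
  "tc_fun M \<xi> \<eta> T = (\<Sum>n. l2inner M (T (\<xi> n)) (\<eta> n))"

type_synonym 'a opmap = "'a op \<Rightarrow> 'a op"

text \<open>Phi in NCB_D(B(H)): linear map B(H) -> B(H), completely bounded, normal
  (weak*-weak* continuous), and a D-bimodule map.\<close>
definition NCB_D :: "'a measure \<Rightarrow> 'a opmap \<Rightarrow> bool" where
  "NCB_D M \<Phi> \<longleftrightarrow>
     (\<forall>T. bop M T \<longrightarrow> bop M (\<Phi> T)) \<and>
     (\<forall>S T. bop M S \<longrightarrow> bop M T \<longrightarrow> op_eq M S T \<longrightarrow> op_eq M (\<Phi> S) (\<Phi> T)) \<and>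
     (\<forall>S T c. bop M S \<longrightarrow> bop M T \<longrightarrow>
        op_eq M (\<Phi> (op_add (op_scale c S) T)) (op_add (op_scale c (\<Phi> S)) (\<Phi> T))) \<and>
     (\<exists>C. \<forall>n A. (\<forall>i<n. \<forall>j<n. bop M (A i j)) \<longrightarrow>
        matnorm M n (\<lambda>i j. \<Phi> (A i j)) \<le> C * matnorm M n A) \<and>
     (\<forall>\<xi> \<eta>. tc_pair M \<xi> \<eta> \<longrightarrow> (\<exists>\<xi>' \<eta>'. tc_pair M \<xi>' \<eta>' \<and>
        (\<forall>T. bop M T \<longrightarrow> tc_fun M \<xi> \<eta> (\<Phi> T) = tc_fun M \<xi>' \<eta>' T))) \<and>
     (\<forall>a\<in>Linf M. \<forall>b\<in>Linf M. \<forall>T. bop M T \<longrightarrow>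
        op_eq M (\<Phi> (mult_op a \<circ> T \<circ> mult_op b)) (mult_op a \<circ> \<Phi> T \<circ> mult_op b))"

definition mapnorm :: "'a measure \<Rightarrow> 'a opmap \<Rightarrow> real" where
  "mapnorm M \<Phi> = Sup {opnorm M (\<Phi> T) | T. bop M T \<and> opnorm M T \<le> 1}"

definition kernel_op :: "'a measure \<Rightarrow> ('a \<times> 'a \<Rightarrow> complex) \<Rightarrow> 'a op" where
  "kernel_op M k = (\<lambda>f s. LINT t|M. k (s, t) * f t)"

text \<open>L^infinity(X, l^2): l^2-valued functions, given coordinatewise.\<close>
definition Linf_l2 :: "'a measure \<Rightarrow> ('a \<Rightarrow> nat \<Rightarrow> complex) \<Rightarrow> bool" where
  "Linf_l2 M f \<longleftrightarrow> (\<forall>n. (\<lambda>x. f x n) \<in> borel_measurable M) \<and>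
     (\<exists>C. AE x in M. summable (\<lambda>n. (cmod (f x n))\<^sup>2) \<and> (\<Sum>n. (cmod (f x n))\<^sup>2) \<le> C)"

definition l2_inner :: "(nat \<Rightarrow> complex) \<Rightarrow> (nat \<Rightarrow> complex) \<Rightarrow> complex" where
  "l2_inner u v = (\<Sum>n. u n * cnj (v n))"

definition marg_eq :: "'a measure \<Rightarrow> ('a \<times> 'a \<Rightarrow> complex) \<Rightarrow> ('a \<times> 'a \<Rightarrow> complex) \<Rightarrow> bool" where
  "marg_eq M \<phi> \<psi> \<longleftrightarrow> (\<exists>N\<in>null_sets M. \<forall>s t. s \<notin> N \<longrightarrow> t \<notin> N \<longrightarrow> \<phi> (s, t) = \<psi> (s, t))"

text \<open>phi is a representative of the symbol Gamma(Phi): phi is Borel, lies in the class of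
  some <f,g> with f,g in L^infinity(X,l^2), and Phi maps the Hilbert-Schmidt operator with
  kernel k to the one with kernel phi k (Phi being the normal extension of this map).\<close>
definition has_symbol :: "'a measure \<Rightarrow> 'a opmap \<Rightarrow> ('a \<times> 'a \<Rightarrow> complex) \<Rightarrow> bool" where
  "has_symbol M \<Phi> \<phi> \<longleftrightarrow>
     \<phi> \<in> borel_measurable (M \<Otimes>\<^sub>M M) \<and>
     (\<exists>f g. Linf_l2 M f \<and> Linf_l2 M g \<and> marg_eq M \<phi> (\<lambda>(s, t). l2_inner (f s) (g t))) \<and>
     (\<forall>k\<in>L2 (M \<Otimes>\<^sub>M M). op_eq M (\<Phi> (kernel_op M k)) (kernel_op M (\<lambda>p. \<phi> p * k p)))"

end

theory Submission
  imports Defs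
begin

text \<open>Two normal maps on B(H) that agree on the Hilbert--Schmidt operators agree everywhere:
a normal functional is continuous along T \<circ> E_m \<longrightarrow> T, where E_m is the conditional
expectation onto a finite measurable partition, and T \<circ> E_m has a square-integrable kernel.
Applied to the map whose symbol is the restriction of \<phi> to R_j \<times> C_j, this identifies
\<Phi>_j(T) with the compression P_{R_j} \<Phi>(T) P_{C_j}; and since \<phi> vanishes on R_j \<times> (X - C_j),
P_{R_j} \<Phi>(T) vanishes off C_j. So \<Phi>(T) is block diagonal with respect to the two partitions,
and its norm is the supremum of the norms of its blocks.\<close>

section \<open>Square-integrable functions\<close>

lemma ae_eq_refl [simp]: "ae_eq M f f"
  by (simp add: ae_eq_def)

lemma ae_eq_sym: "ae_eq M f g \<Longrightarrow> ae_eq M g f"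
  by (auto simp: ae_eq_def elim: AE_mp)

lemma ae_eq_trans: "ae_eq M f g \<Longrightarrow> ae_eq M g h \<Longrightarrow> ae_eq M f h"
  unfolding ae_eq_def by (auto elim: AE_mp)

lemma ae_eqI: "(\<And>x. f x = g x) \<Longrightarrow> ae_eq M f g"
  by (simp add: ae_eq_def)

lemma op_eq_trans: "op_eq M R S \<Longrightarrow> op_eq M S T \<Longrightarrow> op_eq M R T"
  unfolding op_eq_def using ae_eq_trans by blast

lemma op_eq_sym: "op_eq M R S \<Longrightarrow> op_eq M S R"
  unfolding op_eq_def using ae_eq_sym by blast

lemma cmod_indicator_le: "cmod (indicator A x :: complex) \<le> 1"
  by (simp add: indicator_def)

lemma cnj_indicator [simp]: "cnj (indicator A x :: complex) = indicator A x"
  by (simp add: indicator_def)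

lemma borel_measurable_cnj [measurable (raw)]:
  "f \<in> borel_measurable M \<Longrightarrow> (\<lambda>x. cnj (f x)) \<in> borel_measurable M"
  using measurable_compose[OF _ borel_measurable_continuous_onI[of cnj]]
  by (auto intro: continuous_on_cnj continuous_on_id)

lemma L2_D: "f \<in> L2 M \<Longrightarrow> f \<in> borel_measurable M" "f \<in> L2 M \<Longrightarrow> integrable M (\<lambda>x. (cmod (f x))\<^sup>2)"
  by (auto simp: L2_def)

lemma L2_I: "f \<in> borel_measurable M \<Longrightarrow> integrable M (\<lambda>x. (cmod (f x))\<^sup>2) \<Longrightarrow> f \<in> L2 M"
  by (auto simp: L2_def)

lemma L2_mult_bounded: assumes "f \<in> L2 M" "b \<in> borel_measurable M" "\<And>x. cmod (b x) \<le> B"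
  shows "(\<lambda>x. b x * f x) \<in> L2 M"
proof -
  have [measurable]: "f \<in> borel_measurable M" "b \<in> borel_measurable M" using assms by (auto dest: L2_D)
  have "integrable M (\<lambda>x. (cmod (b x * f x))\<^sup>2)"
  proof (rule Bochner_Integration.integrable_bound[of M "\<lambda>x. B\<^sup>2 * (cmod (f x))\<^sup>2"])
    show "integrable M (\<lambda>x. B\<^sup>2 * (cmod (f x))\<^sup>2)" using assms by (auto dest: L2_D)
    have "(cmod (b x) * cmod (f x))\<^sup>2 \<le> (B * cmod (f x))\<^sup>2" for x
      using assms(3)[of x] by (intro power_mono) (simp_all add: mult_right_mono)
    then show "AE x in M. norm ((cmod (b x * f x))\<^sup>2) \<le> norm (B\<^sup>2 * (cmod (f x))\<^sup>2)"
      by (simp add: norm_mult power_mult_distrib)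
  qed measurable
  then show ?thesis by (intro L2_I) auto
qed

lemma L2_dominated: assumes "g \<in> borel_measurable M" "u \<in> L2 M" "\<And>x. cmod (g x) \<le> c * cmod (u x)"
  shows "g \<in> L2 M"
proof (rule L2_I[OF assms(1)])
  have [measurable]: "u \<in> borel_measurable M" using assms(2) by (rule L2_D)
  show "integrable M (\<lambda>x. (cmod (g x))\<^sup>2)"
  proof (rule Bochner_Integration.integrable_bound[of M "\<lambda>x. c\<^sup>2 * (cmod (u x))\<^sup>2"])
    show "integrable M (\<lambda>x. c\<^sup>2 * (cmod (u x))\<^sup>2)" using L2_D(2)[OF assms(2)] by simp
    have "(cmod (g x))\<^sup>2 \<le> (c * cmod (u x))\<^sup>2" for x by (rule power_mono[OF assms(3)]) simp
    then show "AE x in M. norm ((cmod (g x))\<^sup>2) \<le> norm (c\<^sup>2 * (cmod (u x))\<^sup>2)"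
      by (simp add: power_mult_distrib)
  qed (use assms(1) in measurable)
qed

lemma L2_mult_indicator: "A \<in> sets M \<Longrightarrow> f \<in> L2 M \<Longrightarrow> (\<lambda>x. indicator A x * f x) \<in> L2 M"
  by (rule L2_mult_bounded[where B=1]) (auto simp: cmod_indicator_le)

lemma L2_zero [simp]: "(\<lambda>x. 0) \<in> L2 M"
  by (auto simp: L2_def)

lemma l2norm_zero [simp]: "l2norm M (\<lambda>x. 0) = 0"
  by (simp add: l2norm_def)

lemma bop_zero_op: "bop M (\<lambda>f x. 0)"
  unfolding bop_def by (auto intro!: exI[of _ 0])

context finite_measure
begin

lemma L2_integrable: assumes "f \<in> L2 M" shows "integrable M f"
proof -
  have [measurable]: "f \<in> borel_measurable M" using assms by (rule L2_D)
  show ?thesis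
  proof (rule Bochner_Integration.integrable_bound[of M "\<lambda>x. 1 + (cmod (f x))\<^sup>2"])
    show "integrable M (\<lambda>x. 1 + (cmod (f x))\<^sup>2)" using L2_D(2)[OF assms] by auto
    have "cmod (f x) \<le> 1 + (cmod (f x))\<^sup>2" for x
      using sum_squares_bound[of "cmod (f x)" 1] norm_ge_zero[of "f x"]
      unfolding power_one mult_1_right by linarith
    then show "AE x in M. norm (f x) \<le> norm (1 + (cmod (f x))\<^sup>2)" by simp
  qed measurable
qed

lemma L2_one: "(\<lambda>x. 1) \<in> L2 M"
  by (auto simp: L2_def)

lemma L2_add: assumes "f \<in> L2 M" "g \<in> L2 M" shows "(\<lambda>x. f x + g x) \<in> L2 M"
proof -
  have [measurable]: "f \<in> borel_measurable M" "g \<in> borel_measurable M" using assms by (auto dest: L2_D)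
  have "integrable M (\<lambda>x. (cmod (f x + g x))\<^sup>2)"
  proof (rule Bochner_Integration.integrable_bound[of M "\<lambda>x. 2 * (cmod (f x))\<^sup>2 + 2 * (cmod (g x))\<^sup>2"])
    show "integrable M (\<lambda>x. 2 * (cmod (f x))\<^sup>2 + 2 * (cmod (g x))\<^sup>2)"
      using L2_D(2)[OF assms(1)] L2_D(2)[OF assms(2)] by simp
    have "(cmod (f x + g x))\<^sup>2 \<le> 2 * (cmod (f x))\<^sup>2 + 2 * (cmod (g x))\<^sup>2" for x
    proof -
      have "(cmod (f x + g x))\<^sup>2 \<le> (cmod (f x) + cmod (g x))\<^sup>2"
        by (simp add: power_mono norm_triangle_ineq)
      also have "\<dots> \<le> 2 * (cmod (f x))\<^sup>2 + 2 * (cmod (g x))\<^sup>2"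
        using sum_squares_bound[of "cmod (f x)" "cmod (g x)"] by (simp add: power2_sum)
      finally show ?thesis .
    qed
    then show "AE x in M. norm ((cmod (f x + g x))\<^sup>2) \<le> norm (2 * (cmod (f x))\<^sup>2 + 2 * (cmod (g x))\<^sup>2)"
      by simp
  qed measurable
  then show ?thesis by (intro L2_I) auto
qed

lemma L2_cmult: "f \<in> L2 M \<Longrightarrow> (\<lambda>x. c * f x) \<in> L2 M"
  using L2_mult_bounded[where b="\<lambda>x. c" and B="cmod c"] by auto

lemma L2_cmult_right: "f \<in> L2 M \<Longrightarrow> (\<lambda>x. f x * c) \<in> L2 M"
  using L2_cmult[of f c] by (simp add: mult.commute)

lemma L2_diff: "f \<in> L2 M \<Longrightarrow> g \<in> L2 M \<Longrightarrow> (\<lambda>x. f x - g x) \<in> L2 M"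
  using L2_add[of f "\<lambda>x. - g x"] L2_cmult[of g "-1"] by simp

lemma L2_bounded: "b \<in> borel_measurable M \<Longrightarrow> (\<And>x. cmod (b x) \<le> B) \<Longrightarrow> b \<in> L2 M"
  using L2_mult_bounded[OF L2_one, of b B] by simp

lemma L2_indicator: "A \<in> sets M \<Longrightarrow> (indicator A :: _ \<Rightarrow> complex) \<in> L2 M"
  by (rule L2_bounded[where B=1]) (auto simp: cmod_indicator_le)

lemma L2_sum: "finite I \<Longrightarrow> (\<And>i. i \<in> I \<Longrightarrow> g i \<in> L2 M) \<Longrightarrow> (\<lambda>x. \<Sum>i\<in>I. g i x) \<in> L2 M"
  by (induction I rule: finite_induct) (auto intro: L2_add)

lemma integrable_L2_mult_bounded:
  "f \<in> L2 M \<Longrightarrow> b \<in> borel_measurable M \<Longrightarrow> (\<And>x. cmod (b x) \<le> B) \<Longrightarrow> integrable M (\<lambda>t. b t * f t)"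
  using L2_integrable L2_mult_bounded by blast

lemma l2norm_nonneg [simp]: "l2norm M f \<ge> 0"
  by (simp add: l2norm_def)

lemma l2norm_sq: "(l2norm M f)\<^sup>2 = (LINT x|M. (cmod (f x))\<^sup>2)"
  by (simp add: l2norm_def)

lemma nn_integral_cmod_sq_L2:
  "h \<in> L2 M \<Longrightarrow> (\<integral>\<^sup>+x. ennreal ((cmod (h x))\<^sup>2) \<partial>M) = ennreal ((l2norm M h)\<^sup>2)"
  using nn_integral_eq_integral[OF L2_D(2)] by (simp add: l2norm_sq)

lemma l2norm_eq_0_iff: assumes "f \<in> L2 M" shows "l2norm M f = 0 \<longleftrightarrow> (AE x in M. f x = 0)"
proof -
  have "l2norm M f = 0 \<longleftrightarrow> (LINT x|M. (cmod (f x))\<^sup>2) = 0" by (simp add: l2norm_def)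
  also have "\<dots> \<longleftrightarrow> (AE x in M. (cmod (f x))\<^sup>2 = 0)"
    by (rule integral_nonneg_eq_0_iff_AE) (use assms in \<open>auto dest: L2_D\<close>)
  finally show ?thesis by simp
qed

lemma l2norm_cong_ae: "f \<in> L2 M \<Longrightarrow> g \<in> L2 M \<Longrightarrow> ae_eq M f g \<Longrightarrow> l2norm M f = l2norm M g"
  unfolding l2norm_def
  by (rule arg_cong[where f=sqrt], rule integral_cong_AE) (auto simp: ae_eq_def dest: L2_D elim: AE_mp)

lemma l2norm_cmult: "l2norm M (\<lambda>x. c * f x) = cmod c * l2norm M f"
proof -
  have "(LINT x|M. (cmod (c * f x))\<^sup>2) = (cmod c)\<^sup>2 * (LINT x|M. (cmod (f x))\<^sup>2)"
    by (simp add: norm_mult power_mult_distrib)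
  then show ?thesis by (simp add: l2norm_def real_sqrt_mult)
qed

lemma l2norm_minus_commute: "l2norm M (\<lambda>x. g x - f x) = l2norm M (\<lambda>x. f x - g x)"
  by (simp add: l2norm_def norm_minus_commute)

lemma integrable_cmod_mult_L2: assumes "f \<in> L2 M" "g \<in> L2 M"
  shows "integrable M (\<lambda>x. cmod (f x) * cmod (g x))"
proof -
  have [measurable]: "f \<in> borel_measurable M" "g \<in> borel_measurable M" using assms by (auto dest: L2_D)
  show ?thesis
  proof (rule Bochner_Integration.integrable_bound[of M "\<lambda>x. (cmod (f x))\<^sup>2 + (cmod (g x))\<^sup>2"])
    show "integrable M (\<lambda>x. (cmod (f x))\<^sup>2 + (cmod (g x))\<^sup>2)" using assms by (auto dest: L2_D)
    have "cmod (f x) * cmod (g x) \<le> (cmod (f x))\<^sup>2 + (cmod (g x))\<^sup>2" for x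
    proof -
      have "0 \<le> cmod (f x) * cmod (g x)" by simp
      then show ?thesis using sum_squares_bound[of "cmod (f x)" "cmod (g x)"] by linarith
    qed
    then show "AE x in M. norm (cmod (f x) * cmod (g x)) \<le> norm ((cmod (f x))\<^sup>2 + (cmod (g x))\<^sup>2)"
      by (simp add: abs_mult)
  qed measurable
qed

lemma Cauchy_Schwarz_L2: assumes "f \<in> L2 M" "g \<in> L2 M"
  shows "(LINT x|M. cmod (f x) * cmod (g x)) \<le> l2norm M f * l2norm M g"
proof -
  have [measurable]: "f \<in> borel_measurable M" "g \<in> borel_measurable M" using assms by (auto dest: L2_D)
  have sq: "integrable M (\<lambda>x. (cmod (f x))\<^sup>2)" "integrable M (\<lambda>x. (cmod (g x))\<^sup>2)"
    using assms by (auto dest: L2_D)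
  have prod: "integrable M (\<lambda>x. cmod (f x) * cmod (g x))" by (rule integrable_cmod_mult_L2[OF assms])
  have "(\<integral>\<^sup>+x. ennreal (cmod (f x)) * ennreal (cmod (g x)) \<partial>M)\<^sup>2 \<le>
        (\<integral>\<^sup>+x. (ennreal (cmod (f x)))^2 \<partial>M) * (\<integral>\<^sup>+x. (ennreal (cmod (g x)))^2 \<partial>M)"
    by (rule Cauchy_Schwarz_nn_integral) auto
  moreover have "(\<integral>\<^sup>+x. ennreal (cmod (f x)) * ennreal (cmod (g x)) \<partial>M) = ennreal (LINT x|M. cmod (f x) * cmod (g x))"
    using nn_integral_eq_integral[OF prod] by (simp add: ennreal_mult)
  moreover have "(\<integral>\<^sup>+x. (ennreal (cmod (f x)))^2 \<partial>M) = ennreal (LINT x|M. (cmod (f x))\<^sup>2)"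
    using nn_integral_eq_integral[OF sq(1)] by (simp add: ennreal_power)
  moreover have "(\<integral>\<^sup>+x. (ennreal (cmod (g x)))^2 \<partial>M) = ennreal (LINT x|M. (cmod (g x))\<^sup>2)"
    using nn_integral_eq_integral[OF sq(2)] by (simp add: ennreal_power)
  ultimately have "ennreal ((LINT x|M. cmod (f x) * cmod (g x))\<^sup>2) \<le>
       ennreal ((LINT x|M. (cmod (f x))\<^sup>2) * (LINT x|M. (cmod (g x))\<^sup>2))"
    by (simp add: ennreal_power ennreal_mult'' integral_nonneg_AE)
  then have "(LINT x|M. cmod (f x) * cmod (g x))\<^sup>2 \<le> (LINT x|M. (cmod (f x))\<^sup>2) * (LINT x|M. (cmod (g x))\<^sup>2)"
    by (subst (asm) ennreal_le_iff) (auto intro!: mult_nonneg_nonneg integral_nonneg_AE)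
  also have "\<dots> = (l2norm M f * l2norm M g)\<^sup>2"
    by (simp add: l2norm_sq power_mult_distrib)
  finally show ?thesis
    by (rule power2_le_imp_le) simp
qed

lemma cmod_integral_mult_le_l2norm: assumes "f \<in> L2 M" "g \<in> L2 M"
  shows "cmod (LINT t|M. g t * f t) \<le> l2norm M g * l2norm M f"
proof -
  have "cmod (LINT t|M. g t * f t) \<le> (LINT t|M. cmod (g t) * cmod (f t))"
    using integral_norm_bound[of M "\<lambda>t. g t * f t"] by (simp add: norm_mult)
  also have "\<dots> \<le> l2norm M g * l2norm M f" by (rule Cauchy_Schwarz_L2[OF assms(2,1)])
  finally show ?thesis .
qed

lemma l2inner_integrable: assumes "f \<in> L2 M" "g \<in> L2 M" shows "integrable M (\<lambda>x. f x * cnj (g x))"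
proof -
  have [measurable]: "f \<in> borel_measurable M" "g \<in> borel_measurable M" using assms by (auto dest: L2_D)
  show ?thesis
    by (rule Bochner_Integration.integrable_bound[OF integrable_cmod_mult_L2[OF assms]])
       (auto simp: norm_mult)
qed

lemma l2inner_bound: assumes "f \<in> L2 M" "g \<in> L2 M"
  shows "cmod (l2inner M f g) \<le> l2norm M f * l2norm M g"
proof -
  have "cmod (l2inner M f g) \<le> (LINT x|M. cmod (f x) * cmod (g x))"
    using integral_norm_bound[of M "\<lambda>x. f x * cnj (g x)"] by (simp add: l2inner_def norm_mult)
  also have "\<dots> \<le> l2norm M f * l2norm M g" by (rule Cauchy_Schwarz_L2[OF assms])
  finally show ?thesis .
qed

lemma l2norm_triangle: assumes "f \<in> L2 M" "g \<in> L2 M"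
  shows "l2norm M (\<lambda>x. f x + g x) \<le> l2norm M f + l2norm M g"
proof -
  have [measurable]: "f \<in> borel_measurable M" "g \<in> borel_measurable M" using assms by (auto dest: L2_D)
  have "(l2norm M (\<lambda>x. f x + g x))\<^sup>2 = (LINT x|M. (cmod (f x + g x))\<^sup>2)" by (rule l2norm_sq)
  also have "\<dots> \<le> (LINT x|M. (cmod (f x))\<^sup>2 + 2 * (cmod (f x) * cmod (g x)) + (cmod (g x))\<^sup>2)"
  proof (rule integral_mono)
    show "integrable M (\<lambda>x. (cmod (f x + g x))\<^sup>2)" using L2_add[OF assms] by (auto dest: L2_D)
    show "integrable M (\<lambda>x. (cmod (f x))\<^sup>2 + 2 * (cmod (f x) * cmod (g x)) + (cmod (g x))\<^sup>2)"
      using L2_D(2)[OF assms(1)] L2_D(2)[OF assms(2)] integrable_cmod_mult_L2[OF assms] by auto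
    fix x
    have "(cmod (f x + g x))\<^sup>2 \<le> (cmod (f x) + cmod (g x))\<^sup>2"
      by (simp add: power_mono norm_triangle_ineq)
    then show "(cmod (f x + g x))\<^sup>2 \<le> (cmod (f x))\<^sup>2 + 2 * (cmod (f x) * cmod (g x)) + (cmod (g x))\<^sup>2"
      by (simp add: power2_sum)
  qed
  also have "\<dots> = (LINT x|M. (cmod (f x))\<^sup>2) + 2 * (LINT x|M. cmod (f x) * cmod (g x)) + (LINT x|M. (cmod (g x))\<^sup>2)"
    using assms integrable_cmod_mult_L2[OF assms] by (auto dest!: L2_D)
  also have "\<dots> \<le> (l2norm M f)\<^sup>2 + 2 * (l2norm M f * l2norm M g) + (l2norm M g)\<^sup>2"
    using Cauchy_Schwarz_L2[OF assms] by (simp add: l2norm_sq)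
  also have "\<dots> = (l2norm M f + l2norm M g)\<^sup>2" by (simp add: power2_sum)
  finally show ?thesis by (rule power2_le_imp_le) simp
qed

lemma l2norm_sum: assumes "finite I" "\<And>i. i \<in> I \<Longrightarrow> g i \<in> L2 M"
  shows "l2norm M (\<lambda>x. \<Sum>i\<in>I. g i x) \<le> (\<Sum>i\<in>I. l2norm M (g i))"
  using assms
proof (induction I rule: finite_induct)
  case (insert j I)
  have "l2norm M (\<lambda>x. \<Sum>i\<in>insert j I. g i x) = l2norm M (\<lambda>x. g j x + (\<Sum>i\<in>I. g i x))"
    using insert by simp
  also have "\<dots> \<le> l2norm M (g j) + l2norm M (\<lambda>x. \<Sum>i\<in>I. g i x)"
    by (rule l2norm_triangle) (use insert in \<open>auto intro: L2_sum\<close>)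
  also have "\<dots> \<le> l2norm M (g j) + (\<Sum>i\<in>I. l2norm M (g i))" using insert by auto
  finally show ?case using insert by simp
qed simp

lemma l2norm_mult_bound: assumes "f \<in> L2 M" "b \<in> borel_measurable M" "\<And>x. cmod (b x) \<le> B"
  shows "l2norm M (\<lambda>x. b x * f x) \<le> B * l2norm M f"
proof -
  have B0: "0 \<le> B" using assms(3)[of undefined] norm_ge_zero[of "b undefined"] by linarith
  have "(LINT x|M. (cmod (b x * f x))\<^sup>2) \<le> (LINT x|M. B\<^sup>2 * (cmod (f x))\<^sup>2)"
  proof (rule integral_mono)
    show "integrable M (\<lambda>x. (cmod (b x * f x))\<^sup>2)" using L2_mult_bounded[OF assms] by (auto dest: L2_D)
    show "integrable M (\<lambda>x. B\<^sup>2 * (cmod (f x))\<^sup>2)" using L2_D(2)[OF assms(1)] by simp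
    fix x
    have "(cmod (b x))\<^sup>2 \<le> B\<^sup>2" using assms(3)[of x] by (simp add: power_mono)
    then show "(cmod (b x * f x))\<^sup>2 \<le> B\<^sup>2 * (cmod (f x))\<^sup>2"
      by (simp add: norm_mult power_mult_distrib mult_right_mono)
  qed
  also have "\<dots> = (B * l2norm M f)\<^sup>2" by (simp add: l2norm_sq power_mult_distrib)
  finally have "(l2norm M (\<lambda>x. b x * f x))\<^sup>2 \<le> (B * l2norm M f)\<^sup>2" by (simp add: l2norm_sq)
  then show ?thesis by (rule power2_le_imp_le) (simp add: B0)
qed

lemma l2norm_mult_indicator_le: "f \<in> L2 M \<Longrightarrow> A \<in> sets M \<Longrightarrow> l2norm M (\<lambda>x. indicator A x * f x) \<le> l2norm M f"
  using l2norm_mult_bound[of f "indicator A" 1] by (simp add: cmod_indicator_le)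

lemma l2inner_cong_ae: assumes "f \<in> L2 M" "f' \<in> L2 M" "g \<in> L2 M" "ae_eq M f f'"
  shows "l2inner M f g = l2inner M f' g"
proof -
  have [measurable]: "f \<in> borel_measurable M" "f' \<in> borel_measurable M" "g \<in> borel_measurable M"
    using assms by (auto dest: L2_D)
  show ?thesis
    unfolding l2inner_def by (rule integral_cong_AE) (use assms(4) in \<open>auto simp: ae_eq_def elim: AE_mp\<close>)
qed

lemma l2inner_self: "f \<in> L2 M \<Longrightarrow> l2inner M f f = complex_of_real ((l2norm M f)\<^sup>2)"
proof -
  have "l2inner M f f = (LINT x|M. complex_of_real ((cmod (f x))\<^sup>2))"
    unfolding l2inner_def by (simp only: complex_norm_square)
  also have "\<dots> = complex_of_real (LINT x|M. (cmod (f x))\<^sup>2)" by (rule integral_complex_of_real)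
  finally show ?thesis by (simp add: l2norm_sq)
qed

lemma l2inner_diff_left: "f \<in> L2 M \<Longrightarrow> g \<in> L2 M \<Longrightarrow> h \<in> L2 M \<Longrightarrow>
   l2inner M (\<lambda>x. f x - g x) h = l2inner M f h - l2inner M g h"
  unfolding l2inner_def using l2inner_integrable[of f h] l2inner_integrable[of g h]
  by (simp add: left_diff_distrib)

end

section \<open>Bounded operators and the norms of operators and of maps\<close>

context finite_measure
begin

lemma bop_L2: "bop M T \<Longrightarrow> f \<in> L2 M \<Longrightarrow> T f \<in> L2 M"
  by (simp add: bop_def)

lemma bop_cong: "bop M T \<Longrightarrow> f \<in> L2 M \<Longrightarrow> g \<in> L2 M \<Longrightarrow> ae_eq M f g \<Longrightarrow> ae_eq M (T f) (T g)"
  by (simp add: bop_def)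

lemma bop_linear: "bop M T \<Longrightarrow> f \<in> L2 M \<Longrightarrow> g \<in> L2 M \<Longrightarrow>
   ae_eq M (T (\<lambda>x. c * f x + g x)) (\<lambda>x. c * T f x + T g x)"
  by (simp add: bop_def)

lemma bop_zero: assumes "bop M T" shows "ae_eq M (T (\<lambda>x. 0)) (\<lambda>x. 0)"
proof -
  have "ae_eq M (T (\<lambda>x. 1 * 0 + 0)) (\<lambda>x. 1 * T (\<lambda>x. 0) x + T (\<lambda>x. 0) x)"
    using bop_linear[OF assms L2_zero L2_zero] .
  then show ?thesis by (auto simp: ae_eq_def elim: AE_mp)
qed

lemma bop_cmult: assumes "bop M T" "f \<in> L2 M" shows "ae_eq M (T (\<lambda>x. c * f x)) (\<lambda>x. c * T f x)"
proof -
  have "ae_eq M (T (\<lambda>x. c * f x + 0)) (\<lambda>x. c * T f x + T (\<lambda>x. 0) x)"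
    using bop_linear[OF assms L2_zero] .
  then show ?thesis using bop_zero[OF assms(1)] by (auto simp: ae_eq_def elim: AE_mp)
qed

lemma bop_add: assumes "bop M T" "f \<in> L2 M" "g \<in> L2 M"
  shows "ae_eq M (T (\<lambda>x. f x + g x)) (\<lambda>x. T f x + T g x)"
  using bop_linear[OF assms, of 1] by simp

lemma bop_diff: assumes "bop M T" "f \<in> L2 M" "g \<in> L2 M"
  shows "ae_eq M (T (\<lambda>x. f x - g x)) (\<lambda>x. T f x - T g x)"
proof -
  have "ae_eq M (T (\<lambda>x. (-1) * g x + f x)) (\<lambda>x. (-1) * T g x + T f x)"
    using bop_linear[OF assms(1,3,2)] .
  moreover have "(\<lambda>x. (-1) * g x + f x) = (\<lambda>x. f x - g x)" by auto
  ultimately show ?thesis by simp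
qed

lemma bop_sum: assumes "bop M T" "finite I" "\<And>i. i \<in> I \<Longrightarrow> g i \<in> L2 M"
  shows "ae_eq M (T (\<lambda>x. \<Sum>i\<in>I. c i * g i x)) (\<lambda>x. \<Sum>i\<in>I. c i * T (g i) x)"
  using assms(2,3)
proof (induction I rule: finite_induct)
  case empty then show ?case using bop_zero[OF assms(1)] by simp
next
  case (insert j I)
  have L: "(\<lambda>x. \<Sum>i\<in>I. c i * g i x) \<in> L2 M"
    by (rule L2_sum) (use insert in \<open>auto intro: L2_cmult\<close>)
  have "ae_eq M (T (\<lambda>x. c j * g j x + (\<Sum>i\<in>I. c i * g i x)))
           (\<lambda>x. c j * T (g j) x + T (\<lambda>x. \<Sum>i\<in>I. c i * g i x) x)"
    by (rule bop_linear[OF assms(1)]) (use insert L in auto)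
  moreover have "ae_eq M (T (\<lambda>x. \<Sum>i\<in>I. c i * g i x)) (\<lambda>x. \<Sum>i\<in>I. c i * T (g i) x)"
    using insert by auto
  ultimately show ?case using insert by (auto simp: ae_eq_def elim: AE_mp)
qed

lemma bop_cong_L2: assumes "bop M T" "\<And>f. f \<in> L2 M \<Longrightarrow> S f = T f" shows "bop M S"
proof -
  have "(\<lambda>x. c * f x + g x) \<in> L2 M" if "f \<in> L2 M" "g \<in> L2 M" for f g c
    using that by (intro L2_add L2_cmult)
  then show ?thesis using assms unfolding bop_def by simp
qed

lemma bop_bound: "bop M T \<Longrightarrow> \<exists>C\<ge>0. \<forall>f\<in>L2 M. l2norm M (T f) \<le> C * l2norm M f"
  unfolding bop_def
  by (metis (no_types, opaque_lifting) l2norm_nonneg max.cobounded1 max.cobounded2 mult_right_mono order_trans)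

lemma bop_compression:
  assumes T: "bop M T" and a: "a \<in> borel_measurable M" "\<And>x. cmod (a x) \<le> A"
    and b: "b \<in> borel_measurable M" "\<And>x. cmod (b x) \<le> B"
  shows "bop M (mult_op a \<circ> T \<circ> mult_op b)"
proof -
  have comp: "(mult_op a \<circ> T \<circ> mult_op b) f = (\<lambda>x. a x * T (\<lambda>y. b y * f y) x)" for f
    by (simp add: mult_op_def)
  have bf: "f \<in> L2 M \<Longrightarrow> (\<lambda>y. b y * f y) \<in> L2 M" for f using L2_mult_bounded[OF _ b] .
  obtain C where C: "C \<ge> 0" "\<forall>f\<in>L2 M. l2norm M (T f) \<le> C * l2norm M f" using bop_bound[OF T] by auto
  have A0: "0 \<le> A" using a(2)[of undefined] norm_ge_zero[of "a undefined"] by linarith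
  show ?thesis
    unfolding bop_def comp
  proof (intro conjI ballI allI impI)
    fix f assume f: "f \<in> L2 M"
    show "(\<lambda>x. a x * T (\<lambda>y. b y * f y) x) \<in> L2 M"
      by (rule L2_mult_bounded[OF bop_L2[OF T bf[OF f]] a])
  next
    fix f g assume f: "f \<in> L2 M" and g: "g \<in> L2 M" and "ae_eq M f g"
    then have "ae_eq M (\<lambda>y. b y * f y) (\<lambda>y. b y * g y)" by (auto simp: ae_eq_def elim: AE_mp)
    then have "ae_eq M (T (\<lambda>y. b y * f y)) (T (\<lambda>y. b y * g y))" using bop_cong[OF T bf[OF f] bf[OF g]] by simp
    then show "ae_eq M (\<lambda>x. a x * T (\<lambda>y. b y * f y) x) (\<lambda>x. a x * T (\<lambda>y. b y * g y) x)"
      by (auto simp: ae_eq_def elim: AE_mp)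
  next
    fix f g c assume f: "f \<in> L2 M" and g: "g \<in> L2 M"
    have e: "(\<lambda>y. b y * (c * f y + g y)) = (\<lambda>y. c * (b y * f y) + b y * g y)"
      by (auto simp: algebra_simps)
    have "ae_eq M (T (\<lambda>y. c * (b y * f y) + b y * g y)) (\<lambda>x. c * T (\<lambda>y. b y * f y) x + T (\<lambda>y. b y * g y) x)"
      by (rule bop_linear[OF T bf[OF f] bf[OF g]])
    then show "ae_eq M (\<lambda>x. a x * T (\<lambda>y. b y * (c * f y + g y)) x)
        (\<lambda>x. c * (a x * T (\<lambda>y. b y * f y) x) + a x * T (\<lambda>y. b y * g y) x)"
      unfolding e by (auto simp: ae_eq_def algebra_simps elim: AE_mp)
  next
    show "\<exists>C. \<forall>f\<in>L2 M. l2norm M (\<lambda>x. a x * T (\<lambda>y. b y * f y) x) \<le> C * l2norm M f"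
    proof (intro exI[of _ "A * C * B"] ballI)
      fix f assume f: "f \<in> L2 M"
      have "l2norm M (\<lambda>x. a x * T (\<lambda>y. b y * f y) x) \<le> A * l2norm M (T (\<lambda>y. b y * f y))"
        by (rule l2norm_mult_bound[OF bop_L2[OF T bf[OF f]] a])
      also have "\<dots> \<le> A * (C * l2norm M (\<lambda>y. b y * f y))"
        using C bf[OF f] A0 by (simp add: mult_left_mono)
      also have "\<dots> \<le> A * (C * (B * l2norm M f))"
        using l2norm_mult_bound[OF f b] A0 C by (simp add: mult_left_mono)
      finally show "l2norm M (\<lambda>x. a x * T (\<lambda>y. b y * f y) x) \<le> A * C * B * l2norm M f"
        by (simp add: ac_simps)
    qed
  qed
qed

lemma bop_indicator_compression: "bop M T \<Longrightarrow> A \<in> sets M \<Longrightarrow> B \<in> sets M \<Longrightarrow>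
   bop M (mult_op (indicator A) \<circ> T \<circ> mult_op (indicator B))"
  by (rule bop_compression[where A=1 and B=1]) (auto simp: cmod_indicator_le)

lemma opnorm_bdd: assumes "bop M T" shows "bdd_above {l2norm M (T f) | f. f \<in> L2 M \<and> l2norm M f \<le> 1}"
proof -
  obtain C where C: "C \<ge> 0" "\<forall>f\<in>L2 M. l2norm M (T f) \<le> C * l2norm M f" using bop_bound[OF assms] by auto
  have "l2norm M (T f) \<le> C" if "f \<in> L2 M" "l2norm M f \<le> 1" for f
    using order_trans[OF C(2)[rule_format, OF that(1)] mult_left_le[OF that(2) C(1)]] .
  then show ?thesis by (auto intro!: bdd_aboveI)
qed

lemma opnorm_upper: "bop M T \<Longrightarrow> f \<in> L2 M \<Longrightarrow> l2norm M f \<le> 1 \<Longrightarrow> l2norm M (T f) \<le> opnorm M T"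
  unfolding opnorm_def by (rule cSup_upper) (auto intro: opnorm_bdd)

lemma opnorm_nonneg: assumes "bop M T" shows "0 \<le> opnorm M T"
proof -
  have "l2norm M (T (\<lambda>x. 0)) \<le> opnorm M T" by (rule opnorm_upper) (auto simp: assms)
  then show ?thesis using l2norm_nonneg order_trans by blast
qed

lemma opnorm_le: assumes "\<And>f. f \<in> L2 M \<Longrightarrow> l2norm M f \<le> 1 \<Longrightarrow> l2norm M (T f) \<le> B"
  shows "opnorm M T \<le> B"
  unfolding opnorm_def
proof (rule cSup_least)
  show "{l2norm M (T f) |f. f \<in> L2 M \<and> l2norm M f \<le> 1} \<noteq> {}"
    by (auto intro!: exI[of _ "\<lambda>x. 0"])
qed (use assms in auto)

lemma opnorm_zero_op: "opnorm M (\<lambda>f x. 0) = 0"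
  using opnorm_le[of "\<lambda>f x. 0" 0] opnorm_nonneg[OF bop_zero_op] by simp

lemma l2norm_bop_eq_0: assumes "bop M T" "f \<in> L2 M" "l2norm M f = 0" shows "l2norm M (T f) = 0"
proof -
  have "ae_eq M f (\<lambda>x. 0)" using assms l2norm_eq_0_iff[of f] by (simp add: ae_eq_def)
  then have "ae_eq M (T f) (\<lambda>x. 0)"
    using bop_cong[OF assms(1,2) L2_zero] bop_zero[OF assms(1)] ae_eq_trans by blast
  then show ?thesis using l2norm_eq_0_iff[OF bop_L2[OF assms(1,2)]] by (simp add: ae_eq_def)
qed

lemma l2norm_bop_le: assumes "bop M T" "f \<in> L2 M" shows "l2norm M (T f) \<le> opnorm M T * l2norm M f"
proof (cases "l2norm M f = 0")
  case True then show ?thesis using l2norm_bop_eq_0[OF assms] by simp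
next
  case False
  let ?c = "complex_of_real (1 / l2norm M f)"
  have h: "(\<lambda>x. ?c * f x) \<in> L2 M" using assms(2) by (rule L2_cmult)
  have cc: "cmod ?c = 1 / l2norm M f" by (simp add: norm_divide)
  have "l2norm M (T f) / l2norm M f = l2norm M (\<lambda>x. ?c * T f x)"
    by (simp only: l2norm_cmult cc) simp
  also have "\<dots> = l2norm M (T (\<lambda>x. ?c * f x))"
    by (rule l2norm_cong_ae[OF L2_cmult[OF bop_L2[OF assms]] bop_L2[OF assms(1) h]
          ae_eq_sym[OF bop_cmult[OF assms]]])
  also have "\<dots> \<le> opnorm M T"
    by (rule opnorm_upper[OF assms(1) h]) (simp only: l2norm_cmult cc, use False in simp)
  finally show ?thesis using False by (simp add: divide_le_eq order_less_le)
qed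

lemma opnorm_cong: assumes "bop M S" "bop M T" "op_eq M S T" shows "opnorm M S = opnorm M T"
proof -
  have eq: "l2norm M (S f) = l2norm M (T f)" if "f \<in> L2 M" for f
    using assms(3) that unfolding op_eq_def
    by (intro l2norm_cong_ae bop_L2[OF assms(1) that] bop_L2[OF assms(2) that]) auto
  have "(\<lambda>f. l2norm M (S f)) ` {f. f \<in> L2 M \<and> l2norm M f \<le> 1} =
      (\<lambda>f. l2norm M (T f)) ` {f. f \<in> L2 M \<and> l2norm M f \<le> 1}"
    using eq by (intro image_cong) auto
  moreover have "{l2norm M (U f) |f. f \<in> L2 M \<and> l2norm M f \<le> 1} =
      (\<lambda>f. l2norm M (U f)) ` {f. f \<in> L2 M \<and> l2norm M f \<le> 1}" for U
    by blast
  ultimately show ?thesis unfolding opnorm_def by simp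
qed

lemma opnorm_indicator_compression_le: assumes "bop M T" "A \<in> sets M" "B \<in> sets M"
  shows "opnorm M (mult_op (indicator A) \<circ> T \<circ> mult_op (indicator B)) \<le> opnorm M T"
proof (rule opnorm_le)
  fix f assume f: "f \<in> L2 M" "l2norm M f \<le> 1"
  have Bf: "(\<lambda>y. indicator B y * f y) \<in> L2 M" using L2_mult_indicator[OF assms(3) f(1)] .
  have "l2norm M ((mult_op (indicator A) \<circ> T \<circ> mult_op (indicator B)) f)
      = l2norm M (\<lambda>x. indicator A x * T (\<lambda>y. indicator B y * f y) x)" by (simp add: mult_op_def)
  also have "\<dots> \<le> l2norm M (T (\<lambda>y. indicator B y * f y))"
    by (rule l2norm_mult_indicator_le[OF bop_L2[OF assms(1) Bf] assms(2)])
  also have "\<dots> \<le> opnorm M T * l2norm M (\<lambda>y. indicator B y * f y)"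
    by (rule l2norm_bop_le[OF assms(1) Bf])
  also have "\<dots> \<le> opnorm M T * l2norm M f"
    by (intro mult_left_mono l2norm_mult_indicator_le f(1) assms opnorm_nonneg)
  also have "\<dots> \<le> opnorm M T" using f opnorm_nonneg[OF assms(1)] by (simp add: mult_left_le)
  finally show "l2norm M ((mult_op (indicator A) \<circ> T \<circ> mult_op (indicator B)) f) \<le> opnorm M T" .
qed

lemma matnorm_1: "matnorm M 1 A = opnorm M (A 0 0)"
proof -
  have "{sqrt (\<Sum>i<1. (l2norm M (\<lambda>x. \<Sum>j<1. A i j (\<xi> j) x))\<^sup>2) | \<xi>.
       (\<forall>j<1. \<xi> j \<in> L2 M) \<and> (\<Sum>j<1. (l2norm M (\<xi> j))\<^sup>2) \<le> 1}
     = {l2norm M (A 0 0 f) | f. f \<in> L2 M \<and> l2norm M f \<le> 1}"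
  proof (intro equalityI subsetI)
    fix y assume "y \<in> {sqrt (\<Sum>i<1. (l2norm M (\<lambda>x. \<Sum>j<1. A i j (\<xi> j) x))\<^sup>2) | \<xi>.
       (\<forall>j<1. \<xi> j \<in> L2 M) \<and> (\<Sum>j<1. (l2norm M (\<xi> j))\<^sup>2) \<le> 1}"
    then obtain \<xi> where "\<xi> 0 \<in> L2 M" "(l2norm M (\<xi> 0))\<^sup>2 \<le> 1" "y = l2norm M (A 0 0 (\<xi> 0))"
      by (auto simp: lessThan_Suc)
    then show "y \<in> {l2norm M (A 0 0 f) | f. f \<in> L2 M \<and> l2norm M f \<le> 1}"
      by (auto simp: power_le_one_iff)
  next
    fix y assume "y \<in> {l2norm M (A 0 0 f) | f. f \<in> L2 M \<and> l2norm M f \<le> 1}"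
    then obtain f where f: "f \<in> L2 M" "l2norm M f \<le> 1" "y = l2norm M (A 0 0 f)" by auto
    then have "(l2norm M f)\<^sup>2 \<le> 1" by (simp add: power_le_one)
    then show "y \<in> {sqrt (\<Sum>i<1. (l2norm M (\<lambda>x. \<Sum>j<1. A i j (\<xi> j) x))\<^sup>2) | \<xi>.
       (\<forall>j<1. \<xi> j \<in> L2 M) \<and> (\<Sum>j<1. (l2norm M (\<xi> j))\<^sup>2) \<le> 1}"
      using f by (intro CollectI exI[of _ "\<lambda>j. f"]) (auto simp: lessThan_Suc)
  qed
  then show ?thesis unfolding matnorm_def opnorm_def by simp
qed

lemma NCB_D_bop: "NCB_D M \<Phi> \<Longrightarrow> bop M T \<Longrightarrow> bop M (\<Phi> T)"
  by (simp add: NCB_D_def)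

lemma NCB_D_bimodule: "NCB_D M \<Phi> \<Longrightarrow> a \<in> Linf M \<Longrightarrow> b \<in> Linf M \<Longrightarrow> bop M T \<Longrightarrow>
    op_eq M (\<Phi> (mult_op a \<circ> T \<circ> mult_op b)) (mult_op a \<circ> \<Phi> T \<circ> mult_op b)"
  by (simp add: NCB_D_def)

lemma indicator_Linf: "A \<in> sets M \<Longrightarrow> (indicator A :: _ \<Rightarrow> complex) \<in> Linf M"
  unfolding Linf_def by (auto intro!: exI[of _ 1] simp: indicator_def)

text \<open>Complete boundedness at matrix size 1 is all that is needed to make mapnorm finite.\<close>

lemma NCB_D_opnorm_bound: assumes "NCB_D M \<Phi>"
  shows "\<exists>C\<ge>0. \<forall>T. bop M T \<longrightarrow> opnorm M (\<Phi> T) \<le> C * opnorm M T"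
proof -
  obtain C where C: "\<And>n A. (\<forall>i<n. \<forall>j<n. bop M (A i j)) \<Longrightarrow> matnorm M n (\<lambda>i j. \<Phi> (A i j)) \<le> C * matnorm M n A"
    using assms unfolding NCB_D_def by blast
  have "opnorm M (\<Phi> T) \<le> max C 0 * opnorm M T" if T: "bop M T" for T
  proof -
    have "matnorm M 1 (\<lambda>i j. \<Phi> T) \<le> C * matnorm M 1 (\<lambda>i j. T)"
      by (rule C) (use T in auto)
    then have "opnorm M (\<Phi> T) \<le> C * opnorm M T"
      by (simp only: matnorm_1)
    also have "\<dots> \<le> max C 0 * opnorm M T" by (intro mult_right_mono opnorm_nonneg T) simp
    finally show ?thesis .
  qed
  then show ?thesis by (intro exI[of _ "max C 0"]) simp
qed

lemma mapnorm_bdd: assumes "NCB_D M \<Phi>" shows "bdd_above {opnorm M (\<Phi> T) | T. bop M T \<and> opnorm M T \<le> 1}"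
proof -
  obtain C where C: "C \<ge> 0" "\<And>T. bop M T \<Longrightarrow> opnorm M (\<Phi> T) \<le> C * opnorm M T"
    using NCB_D_opnorm_bound[OF assms] by blast
  have "opnorm M (\<Phi> T) \<le> C" if "bop M T" "opnorm M T \<le> 1" for T
    using order_trans[OF C(2)[OF that(1)] mult_left_le[OF that(2) C(1)]] .
  then show ?thesis by (auto intro!: bdd_aboveI)
qed

lemma mapnorm_upper: "NCB_D M \<Phi> \<Longrightarrow> bop M T \<Longrightarrow> opnorm M T \<le> 1 \<Longrightarrow> opnorm M (\<Phi> T) \<le> mapnorm M \<Phi>"
  unfolding mapnorm_def by (rule cSup_upper) (auto intro: mapnorm_bdd)

lemma mapnorm_le: assumes "\<And>T. bop M T \<Longrightarrow> opnorm M T \<le> 1 \<Longrightarrow> opnorm M (\<Phi> T) \<le> B"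
  shows "mapnorm M \<Phi> \<le> B"
  unfolding mapnorm_def
proof (rule cSup_least)
  show "{opnorm M (\<Phi> T) |T. bop M T \<and> opnorm M T \<le> 1} \<noteq> {}"
    using bop_zero_op opnorm_zero_op by (auto intro!: exI[of _ "\<lambda>f x. 0"])
qed (use assms in auto)

lemma mapnorm_nonneg: assumes "NCB_D M \<Phi>" shows "0 \<le> mapnorm M \<Phi>"
  using mapnorm_upper[OF assms bop_zero_op] opnorm_zero_op opnorm_nonneg[OF NCB_D_bop[OF assms bop_zero_op]]
  by simp

end

section \<open>Finite-rank operators and conditional expectations onto finite partitions\<close>

definition finite_rank_op :: "'a measure \<Rightarrow> 'b set \<Rightarrow> ('b \<Rightarrow> 'a \<Rightarrow> complex) \<Rightarrow> ('b \<Rightarrow> 'a \<Rightarrow> complex) \<Rightarrow> 'a op" where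
  "finite_rank_op M V a b = (\<lambda>f s. \<Sum>v\<in>V. a v s * (LINT t|M. b v t * f t))"

text \<open>On a null fibre the mean is 0 (division by zero); such fibres are invisible in L^2.\<close>

definition fibre_mean :: "'a measure \<Rightarrow> ('a \<Rightarrow> 'k) \<Rightarrow> 'k \<Rightarrow> ('a \<Rightarrow> complex) \<Rightarrow> complex" where
  "fibre_mean M key v f = (LINT t|M. indicator (key -` {v}) t * f t) / complex_of_real (measure M (key -` {v}))"

definition cond_exp_fibres :: "'a measure \<Rightarrow> ('a \<Rightarrow> 'k) \<Rightarrow> ('a \<Rightarrow> complex) \<Rightarrow> ('a \<Rightarrow> complex)" where
  "cond_exp_fibres M key f = (\<lambda>x. fibre_mean M key (key x) f)"

lemma sum_fibres_indicator: "(\<Sum>v\<in>range key. g v * indicator (key -` {v}) x) = (g (key x) :: 'b::comm_ring_1)"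
  if "finite (range key)"
proof -
  have "(\<Sum>v\<in>range key. g v * indicator (key -` {v}) x) = (\<Sum>v\<in>range key. if key x = v then g v else 0)"
    by (intro sum.cong) (auto simp: indicator_def)
  also have "\<dots> = g (key x)" using that by (subst sum.delta') auto
  finally show ?thesis .
qed

context finite_measure
begin

lemma l2norm_finite_rank_op_le:
  assumes V: "finite V" and a: "\<And>v. v \<in> V \<Longrightarrow> a v \<in> L2 M" and b: "\<And>v. v \<in> V \<Longrightarrow> b v \<in> L2 M"
    and f: "f \<in> L2 M"
  shows "l2norm M (finite_rank_op M V a b f) \<le> (\<Sum>v\<in>V. l2norm M (a v) * l2norm M (b v)) * l2norm M f"
proof -
  have "l2norm M (finite_rank_op M V a b f) \<le> (\<Sum>v\<in>V. l2norm M (\<lambda>s. (LINT t|M. b v t * f t) * a v s))"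
    unfolding finite_rank_op_def
    by (subst mult.commute, rule l2norm_sum[OF V]) (rule L2_cmult[OF a])
  also have "\<dots> = (\<Sum>v\<in>V. cmod (LINT t|M. b v t * f t) * l2norm M (a v))"
    by (simp add: l2norm_cmult)
  also have "\<dots> \<le> (\<Sum>v\<in>V. (l2norm M (b v) * l2norm M f) * l2norm M (a v))"
    by (intro sum_mono mult_right_mono cmod_integral_mult_le_l2norm[OF f b]) simp_all
  also have "\<dots> = (\<Sum>v\<in>V. l2norm M (a v) * l2norm M (b v)) * l2norm M f"
    by (simp add: sum_distrib_right sum_distrib_left ac_simps)
  finally show ?thesis .
qed

lemma bop_finite_rank_op:
  assumes V: "finite V" and a: "\<And>v. v \<in> V \<Longrightarrow> a v \<in> L2 M"
    and b: "\<And>v. v \<in> V \<Longrightarrow> b v \<in> borel_measurable M" "\<And>v t. v \<in> V \<Longrightarrow> cmod (b v t) \<le> B"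
  shows "bop M (finite_rank_op M V a b)"
  unfolding bop_def
proof (intro conjI ballI allI impI)
  fix f assume f: "f \<in> L2 M"
  show "finite_rank_op M V a b f \<in> L2 M" unfolding finite_rank_op_def
    by (rule L2_sum[OF V]) (rule L2_cmult_right[OF a])
next
  fix f g assume f: "f \<in> L2 M" and g: "g \<in> L2 M" and fg: "ae_eq M f g"
  have "(LINT t|M. b v t * f t) = (LINT t|M. b v t * g t)" if "v \<in> V" for v
    by (rule integral_cong_AE)
      (use f g fg b that borel_measurable_integrable[OF integrable_L2_mult_bounded[OF f b(1) b(2)]]
        borel_measurable_integrable[OF integrable_L2_mult_bounded[OF g b(1) b(2)]] in \<open>auto simp: ae_eq_def elim: AE_mp\<close>)
  then show "ae_eq M (finite_rank_op M V a b f) (finite_rank_op M V a b g)"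
    unfolding finite_rank_op_def by (intro ae_eqI) (auto intro!: sum.cong)
next
  fix f g c assume f: "f \<in> L2 M" and g: "g \<in> L2 M"
  have "(LINT t|M. b v t * (c * f t + g t)) = c * (LINT t|M. b v t * f t) + (LINT t|M. b v t * g t)"
    if "v \<in> V" for v
  proof -
    have i1: "integrable M (\<lambda>t. b v t * f t)" by (rule integrable_L2_mult_bounded[OF f b(1)[OF that] b(2)[OF that]])
    have i2: "integrable M (\<lambda>t. b v t * g t)" by (rule integrable_L2_mult_bounded[OF g b(1)[OF that] b(2)[OF that]])
    have "(LINT t|M. b v t * (c * f t + g t)) = (LINT t|M. c * (b v t * f t) + b v t * g t)"
      by (simp add: algebra_simps)
    also have "\<dots> = (LINT t|M. c * (b v t * f t)) + (LINT t|M. b v t * g t)"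
      using i1 i2 by (intro Bochner_Integration.integral_add) auto
    finally show ?thesis by simp
  qed
  then show "ae_eq M (finite_rank_op M V a b (\<lambda>x. c * f x + g x)) (\<lambda>x. c * finite_rank_op M V a b f x + finite_rank_op M V a b g x)"
    unfolding finite_rank_op_def by (intro ae_eqI) (auto simp: algebra_simps sum_distrib_left sum.distrib intro!: sum.cong)
next
  have bL2: "b v \<in> L2 M" if "v \<in> V" for v using b that by (intro L2_bounded) auto
  have "l2norm M (finite_rank_op M V a b f) \<le> (\<Sum>v\<in>V. l2norm M (a v) * l2norm M (b v)) * l2norm M f"
    if "f \<in> L2 M" for f
    by (rule l2norm_finite_rank_op_le[OF V a bL2 that])
  then show "\<exists>C. \<forall>f\<in>L2 M. l2norm M (finite_rank_op M V a b f) \<le> C * l2norm M f"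
    by blast
qed

lemma kernel_op_finite_rank:
  assumes V: "finite V"
    and b: "\<And>v. v \<in> V \<Longrightarrow> b v \<in> borel_measurable M" "\<And>v t. v \<in> V \<Longrightarrow> cmod (b v t) \<le> B"
    and f: "f \<in> L2 M"
  shows "kernel_op M (\<lambda>p. \<Sum>v\<in>V. a v (fst p) * b v (snd p)) f = finite_rank_op M V a b f"
proof
  fix s
  have "(LINT t|M. (\<Sum>v\<in>V. a v s * b v t) * f t) = (LINT t|M. (\<Sum>v\<in>V. a v s * (b v t * f t)))"
    by (simp add: sum_distrib_right mult.assoc)
  also have "\<dots> = (\<Sum>v\<in>V. (LINT t|M. a v s * (b v t * f t)))"
    by (rule Bochner_Integration.integral_sum) (use integrable_L2_mult_bounded[OF f b(1) b(2)] in auto)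
  also have "\<dots> = (\<Sum>v\<in>V. a v s * (LINT t|M. b v t * f t))" by simp
  finally show "kernel_op M (\<lambda>p. \<Sum>v\<in>V. a v (fst p) * b v (snd p)) f s = finite_rank_op M V a b f s"
    by (simp add: kernel_op_def finite_rank_op_def)
qed

lemma integrable_fst_finite_measure:
  fixes g :: "'a \<Rightarrow> real"
  assumes g: "integrable M g" and nn: "\<And>x. 0 \<le> g x"
  shows "integrable (M \<Otimes>\<^sub>M M) (\<lambda>p. g (fst p))"
proof -
  have [measurable]: "g \<in> borel_measurable M" using g by auto
  have "(\<integral>\<^sup>+p. ennreal (g (fst p)) \<partial>(M \<Otimes>\<^sub>M M)) = (\<integral>\<^sup>+x. \<integral>\<^sup>+y. ennreal (g (fst (x, y))) \<partial>M \<partial>M)"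
    by (rule nn_integral_fst[symmetric]) measurable
  also have "\<dots> = (\<integral>\<^sup>+x. ennreal (g x) * emeasure M (space M) \<partial>M)" by simp
  also have "\<dots> = (\<integral>\<^sup>+x. ennreal (g x) \<partial>M) * emeasure M (space M)"
    by (rule nn_integral_multc) measurable
  also have "\<dots> < \<infinity>"
  proof -
    have "emeasure M (space M) < \<infinity>" by (simp add: less_top[symmetric])
    then show ?thesis using g nn by (auto simp: integrable_iff_bounded ennreal_mult_less_top)
  qed
  finally have fin: "(\<integral>\<^sup>+p. ennreal (g (fst p)) \<partial>(M \<Otimes>\<^sub>M M)) < \<infinity>" .
  show ?thesis
    by (rule integrableI_bounded) (use fin nn in auto)
qed

lemma L2_prod_bounded_by_fst:
  assumes k: "k \<in> borel_measurable (M \<Otimes>\<^sub>M M)" and h: "h \<in> L2 M"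
    and bound: "\<And>s t. cmod (k (s, t)) \<le> cmod (h s)"
  shows "k \<in> L2 (M \<Otimes>\<^sub>M M)"
proof -
  have "integrable (M \<Otimes>\<^sub>M M) (\<lambda>p. (cmod (h (fst p)))\<^sup>2)"
    using integrable_fst_finite_measure[OF L2_D(2)[OF h]] by simp
  then have "integrable (M \<Otimes>\<^sub>M M) (\<lambda>p. (cmod (k p))\<^sup>2)"
  proof (rule Bochner_Integration.integrable_bound)
    show "(\<lambda>p. (cmod (k p))\<^sup>2) \<in> borel_measurable (M \<Otimes>\<^sub>M M)" using k by measurable
    show "AE p in M \<Otimes>\<^sub>M M. norm ((cmod (k p))\<^sup>2) \<le> norm ((cmod (h (fst p)))\<^sup>2)"
    proof (rule AE_I2)
      fix p :: "'a \<times> 'a"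
      have "cmod (k p) \<le> cmod (h (fst p))" using bound[of "fst p" "snd p"] by simp
      then show "norm ((cmod (k p))\<^sup>2) \<le> norm ((cmod (h (fst p)))\<^sup>2)" by (simp add: power_mono)
    qed
  qed
  then show ?thesis using k unfolding L2_def by auto
qed

lemma L2_finite_rank_kernel:
  assumes V: "finite V" and a: "\<And>v. v \<in> V \<Longrightarrow> a v \<in> L2 M"
    and b: "\<And>v. v \<in> V \<Longrightarrow> b v \<in> borel_measurable M" "\<And>v t. v \<in> V \<Longrightarrow> cmod (b v t) \<le> B"
  shows "(\<lambda>p. \<Sum>v\<in>V. a v (fst p) * b v (snd p)) \<in> L2 (M \<Otimes>\<^sub>M M)"
proof (rule L2_prod_bounded_by_fst)
  show "(\<lambda>p. \<Sum>v\<in>V. a v (fst p) * b v (snd p)) \<in> borel_measurable (M \<Otimes>\<^sub>M M)"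
  proof (rule borel_measurable_sum)
    fix v assume v: "v \<in> V"
    note [measurable] = L2_D(1)[OF a[OF v]] b(1)[OF v]
    show "(\<lambda>p. a v (fst p) * b v (snd p)) \<in> borel_measurable (M \<Otimes>\<^sub>M M)" by measurable
  qed
  have "(\<lambda>s. complex_of_real (cmod (a v s))) \<in> L2 M" if "v \<in> V" for v
    using a[OF that] by (auto simp: L2_def)
  then show "(\<lambda>s. \<Sum>v\<in>V. complex_of_real \<bar>B\<bar> * complex_of_real (cmod (a v s))) \<in> L2 M"
    by (intro L2_sum[OF V] L2_cmult)
  fix s t
  have "cmod (\<Sum>v\<in>V. a v s * b v t) \<le> (\<Sum>v\<in>V. \<bar>B\<bar> * cmod (a v s))"
  proof (rule order_trans[OF norm_sum sum_mono])
    fix v assume v: "v \<in> V"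
    have "cmod (a v s) * cmod (b v t) \<le> cmod (a v s) * \<bar>B\<bar>"
      using b(2)[OF v, of t] by (intro mult_left_mono) auto
    then show "cmod (a v s * b v t) \<le> \<bar>B\<bar> * cmod (a v s)" by (simp add: norm_mult mult.commute)
  qed
  also have "\<dots> = cmod (\<Sum>v\<in>V. complex_of_real \<bar>B\<bar> * complex_of_real (cmod (a v s)))"
    by (simp add: sum_nonneg flip: of_real_mult of_real_sum)
  finally show "cmod (\<Sum>v\<in>V. a v (fst (s, t)) * b v (snd (s, t)))
      \<le> cmod (\<Sum>v\<in>V. complex_of_real \<bar>B\<bar> * complex_of_real (cmod (a v s)))" by simp
qed

end

locale finite_fibres = finite_measure M for M :: "'a measure" and key :: "'a \<Rightarrow> 'k" +
  assumes finite_range_key: "finite (range key)" and sets_fibre: "\<And>v. key -` {v} \<in> sets M"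
begin

abbreviation "fibre v \<equiv> key -` {v}"

lemma cond_exp_fibres_eq_sum: "cond_exp_fibres M key f = (\<lambda>x. \<Sum>v\<in>range key. fibre_mean M key v f * indicator (fibre v) x)"
  unfolding cond_exp_fibres_def using sum_fibres_indicator[OF finite_range_key, of "\<lambda>v. fibre_mean M key v f"] by simp

lemma L2_cond_exp_fibres: "cond_exp_fibres M key f \<in> L2 M"
  unfolding cond_exp_fibres_eq_sum
  by (rule L2_sum[OF finite_range_key]) (rule L2_cmult[OF L2_indicator[OF sets_fibre]])

lemma integrable_indicator_fibre_mult: "f \<in> L2 M \<Longrightarrow> integrable M (\<lambda>t. indicator (fibre v) t * f t)"
  using integrable_L2_mult_bounded[of f "indicator (fibre v)" 1] borel_measurable_indicator[OF sets_fibre[of v]]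
  by (auto simp: cmod_indicator_le)

lemma cond_exp_fibres_diff: assumes "f \<in> L2 M" "g \<in> L2 M"
  shows "cond_exp_fibres M key (\<lambda>x. f x - g x) = (\<lambda>x. cond_exp_fibres M key f x - cond_exp_fibres M key g x)"
proof -
  have "fibre_mean M key v (\<lambda>x. f x - g x) = fibre_mean M key v f - fibre_mean M key v g" for v
  proof -
    have "(LINT t|M. indicator (fibre v) t * (f t - g t)) = (LINT t|M. indicator (fibre v) t * f t - indicator (fibre v) t * g t)"
      by (simp add: algebra_simps)
    also have "\<dots> = (LINT t|M. indicator (fibre v) t * f t) - (LINT t|M. indicator (fibre v) t * g t)"
      by (rule Bochner_Integration.integral_diff) (use integrable_indicator_fibre_mult assms in auto)
    finally show ?thesis unfolding fibre_mean_def by (simp add: diff_divide_distrib)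
  qed
  then show ?thesis unfolding cond_exp_fibres_def by auto
qed

lemma fibre_Int_space [simp]: "fibre v \<inter> space M = fibre v"
  using sets_fibre[of v] by (simp add: sets.Int_space_eq2)

lemma integral_indicator_fibre: "(LINT t|M. (indicator (fibre v) t :: real)) = measure M (fibre v)"
  using sets_fibre[of v] by (simp add: sets.Int_space_eq2)

lemma fibre_mean_bound: assumes f: "f \<in> L2 M"
  shows "(cmod (fibre_mean M key v f))\<^sup>2 * measure M (fibre v) \<le> (LINT t|M. indicator (fibre v) t * (cmod (f t))\<^sup>2)"
proof (cases "measure M (fibre v) = 0")
  case True then show ?thesis
    by (auto intro!: integral_nonneg_AE simp: indicator_def)
next
  case False
  let ?m = "measure M (fibre v)"
  have mpos: "?m > 0" using False by (simp add: order_less_le)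
  have L1: "(indicator (fibre v) :: _ \<Rightarrow> complex) \<in> L2 M" by (rule L2_indicator[OF sets_fibre])
  have L2': "(\<lambda>t. indicator (fibre v) t * f t) \<in> L2 M" by (rule L2_mult_indicator[OF sets_fibre f])
  have n1: "(l2norm M (indicator (fibre v) :: _ \<Rightarrow> complex))\<^sup>2 = ?m"
  proof -
    have "(\<lambda>t. (cmod (indicator (fibre v) t :: complex))\<^sup>2) = (\<lambda>t. indicator (fibre v) t)"
      by (auto simp: indicator_def)
    then show ?thesis by (simp add: l2norm_sq integral_indicator_fibre)
  qed
  have n2: "(l2norm M (\<lambda>t. indicator (fibre v) t * f t))\<^sup>2 = (LINT t|M. indicator (fibre v) t * (cmod (f t))\<^sup>2)"
  proof -
    have "(\<lambda>t. (cmod (indicator (fibre v) t * f t))\<^sup>2) = (\<lambda>t. indicator (fibre v) t * (cmod (f t))\<^sup>2)"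
      by (auto simp: indicator_def)
    then show ?thesis by (simp add: l2norm_sq)
  qed
  have "cmod (LINT t|M. indicator (fibre v) t * f t) \<le> (LINT t|M. cmod (indicator (fibre v) t * f t))"
    by (rule integral_norm_bound)
  also have "\<dots> = (LINT t|M. cmod (indicator (fibre v) t :: complex) * cmod (indicator (fibre v) t * f t))"
    by (intro Bochner_Integration.integral_cong) (auto simp: indicator_def)
  also have "\<dots> \<le> l2norm M (indicator (fibre v) :: _ \<Rightarrow> complex) * l2norm M (\<lambda>t. indicator (fibre v) t * f t)"
    by (rule Cauchy_Schwarz_L2[OF L1 L2'])
  finally have c: "cmod (LINT t|M. indicator (fibre v) t * f t) \<le> l2norm M (indicator (fibre v) :: _ \<Rightarrow> complex) * l2norm M (\<lambda>t. indicator (fibre v) t * f t)" .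
  have "(cmod (LINT t|M. indicator (fibre v) t * f t))\<^sup>2 \<le> (l2norm M (indicator (fibre v) :: _ \<Rightarrow> complex) * l2norm M (\<lambda>t. indicator (fibre v) t * f t))\<^sup>2"
    by (rule power_mono[OF c]) simp
  also have "\<dots> = ?m * (LINT t|M. indicator (fibre v) t * (cmod (f t))\<^sup>2)"
    by (simp only: power_mult_distrib n1 n2)
  finally have "(cmod (LINT t|M. indicator (fibre v) t * f t))\<^sup>2 \<le> ?m * (LINT t|M. indicator (fibre v) t * (cmod (f t))\<^sup>2)" .
  moreover have "(cmod (fibre_mean M key v f))\<^sup>2 * ?m = (cmod (LINT t|M. indicator (fibre v) t * f t))\<^sup>2 / ?m"
    unfolding fibre_mean_def using mpos by (simp add: norm_divide power_divide power2_eq_square)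
  ultimately show ?thesis using mpos by (simp add: divide_le_eq mult.commute)
qed

lemma l2norm_cond_exp_fibres_le: assumes f: "f \<in> L2 M" shows "l2norm M (cond_exp_fibres M key f) \<le> l2norm M f"
proof -
  have [measurable]: "f \<in> borel_measurable M" using f by (rule L2_D)
  have e1: "(\<lambda>x. (cmod (cond_exp_fibres M key f x))\<^sup>2) = (\<lambda>x. \<Sum>v\<in>range key. (cmod (fibre_mean M key v f))\<^sup>2 * indicator (fibre v) x)"
    unfolding cond_exp_fibres_def using sum_fibres_indicator[OF finite_range_key, of "\<lambda>v. (cmod (fibre_mean M key v f))\<^sup>2"] by simp
  have "(LINT x|M. (cmod (cond_exp_fibres M key f x))\<^sup>2) = (\<Sum>v\<in>range key. (LINT x|M. (cmod (fibre_mean M key v f))\<^sup>2 * indicator (fibre v) x))"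
    unfolding e1 by (rule Bochner_Integration.integral_sum) (auto intro!: integrable_real_indicator sets_fibre simp: less_top[symmetric])
  also have "\<dots> = (\<Sum>v\<in>range key. (cmod (fibre_mean M key v f))\<^sup>2 * measure M (fibre v))"
    by (simp add: integral_indicator_fibre)
  also have "\<dots> \<le> (\<Sum>v\<in>range key. (LINT t|M. indicator (fibre v) t * (cmod (f t))\<^sup>2))"
    by (intro sum_mono fibre_mean_bound f)
  also have "\<dots> = (LINT t|M. (\<Sum>v\<in>range key. indicator (fibre v) t * (cmod (f t))\<^sup>2))"
  proof (rule Bochner_Integration.integral_sum[symmetric])
    fix v
    show "integrable M (\<lambda>t. indicator (fibre v) t * (cmod (f t))\<^sup>2)"
      using integrable_mult_indicator[OF sets_fibre L2_D(2)[OF f], of v] by simp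
  qed
  also have "\<dots> = (LINT t|M. (\<Sum>v\<in>range key. (cmod (f t))\<^sup>2 * indicator (fibre v) t))"
    by (simp only: mult.commute)
  also have "\<dots> = (LINT t|M. (cmod (f t))\<^sup>2)"
    using sum_fibres_indicator[OF finite_range_key, of "\<lambda>v. (cmod (f _))\<^sup>2"] by simp
  finally show ?thesis by (simp add: l2norm_def)
qed

lemma cond_exp_fibres_fixes: assumes g: "g \<in> L2 M" and gh: "\<And>x. g x = h (key x)"
  shows "ae_eq M (cond_exp_fibres M key g) g"
proof -
  have c: "fibre_mean M key v g = h v" if "measure M (fibre v) \<noteq> 0" for v
  proof -
    have "(LINT t|M. indicator (fibre v) t * g t) = (LINT t|M. h v * complex_of_real (indicator (fibre v) t))"
      by (intro Bochner_Integration.integral_cong) (auto simp: gh indicator_def)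
    also have "\<dots> = h v * complex_of_real (measure M (fibre v))" by (simp add: integral_indicator_fibre)
    finally show ?thesis using that unfolding fibre_mean_def by simp
  qed
  have "AE x in M. \<forall>v\<in>range key. measure M (fibre v) = 0 \<longrightarrow> x \<notin> fibre v"
  proof (rule AE_finite_allI[OF finite_range_key])
    fix v
    show "AE x in M. measure M (fibre v) = 0 \<longrightarrow> x \<notin> fibre v"
    proof (cases "measure M (fibre v) = 0")
      case True
      then have "fibre v \<in> null_sets M" using sets_fibre[of v]
        by (simp add: null_sets_def emeasure_eq_measure)
      then show ?thesis by (rule AE_mp[OF AE_not_in]) (auto intro!: AE_I2)
    qed simp
  qed
  then show ?thesis unfolding ae_eq_def
  proof (rule AE_mp, intro AE_I2 impI)
    fix x assume "\<forall>v\<in>range key. measure M (fibre v) = 0 \<longrightarrow> x \<notin> fibre v"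
    then have "measure M (fibre (key x)) \<noteq> 0" by auto
    then show "cond_exp_fibres M key g x = g x" by (simp add: cond_exp_fibres_def c gh)
  qed
qed

abbreviation "fibre_density v t \<equiv> indicator (fibre v) t / complex_of_real (measure M (fibre v))"

lemma fibre_density_bound: "cmod (fibre_density v t) \<le> (\<Sum>w\<in>range key. 1 / measure M (fibre w))"
proof -
  have "cmod (indicator (fibre v) t / complex_of_real (measure M (fibre v))) \<le> 1 / measure M (fibre v)"
    by (auto simp: indicator_def norm_divide)
  also have "\<dots> \<le> (\<Sum>w\<in>range key. 1 / measure M (fibre w))"
  proof (cases "v \<in> range key")
    case True then show ?thesis by (intro member_le_sum finite_range_key) auto
  next
    case False then have "fibre v = {}" by auto
    then show ?thesis by (auto intro!: sum_nonneg)
  qed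
  finally show ?thesis .
qed

lemma borel_measurable_fibre_density: "(\<lambda>t. fibre_density v t) \<in> borel_measurable M"
  using borel_measurable_indicator[OF sets_fibre[of v]] by measurable

lemma bop_cond_exp_fibres_eq_finite_rank: assumes T: "bop M T" and f: "f \<in> L2 M"
  shows "ae_eq M (T (cond_exp_fibres M key f)) (finite_rank_op M (range key) (\<lambda>v. T (indicator (fibre v))) fibre_density f)"
proof -
  have "ae_eq M (T (\<lambda>x. \<Sum>v\<in>range key. fibre_mean M key v f * indicator (fibre v) x))
     (\<lambda>x. \<Sum>v\<in>range key. fibre_mean M key v f * T (indicator (fibre v)) x)"
    by (rule bop_sum[OF T finite_range_key]) (rule L2_indicator[OF sets_fibre])
  moreover have "(LINT t|M. fibre_density v t * f t) = fibre_mean M key v f" for v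
  proof -
    have "(LINT t|M. fibre_density v t * f t) = (LINT t|M. (indicator (fibre v) t * f t) / complex_of_real (measure M (fibre v)))"
      by simp
    also have "\<dots> = fibre_mean M key v f" unfolding fibre_mean_def by (rule integral_divide_zero)
    finally show ?thesis .
  qed
  ultimately show ?thesis unfolding cond_exp_fibres_eq_sum finite_rank_op_def by (simp add: mult.commute)
qed

definition "cond_exp_kernel T = (\<lambda>p. \<Sum>v\<in>range key. T (indicator (fibre v)) (fst p) * fibre_density v (snd p))"

lemma L2_cond_exp_kernel: "bop M T \<Longrightarrow> cond_exp_kernel T \<in> L2 (M \<Otimes>\<^sub>M M)"
  unfolding cond_exp_kernel_def
  by (rule L2_finite_rank_kernel[OF finite_range_key bop_L2[OF _ L2_indicator[OF sets_fibre]]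
        borel_measurable_fibre_density fibre_density_bound])

lemma kernel_op_cond_exp_kernel_eq_finite_rank: "f \<in> L2 M \<Longrightarrow>
    kernel_op M (cond_exp_kernel T) f = finite_rank_op M (range key) (\<lambda>v. T (indicator (fibre v))) fibre_density f"
  unfolding cond_exp_kernel_def
  by (rule kernel_op_finite_rank[OF finite_range_key borel_measurable_fibre_density fibre_density_bound])

lemma bop_kernel_op_cond_exp_kernel: "bop M T \<Longrightarrow> bop M (kernel_op M (cond_exp_kernel T))"
  by (rule bop_cong_L2[OF bop_finite_rank_op[OF finite_range_key bop_L2[OF _ L2_indicator[OF sets_fibre]]
        borel_measurable_fibre_density fibre_density_bound] kernel_op_cond_exp_kernel_eq_finite_rank])

lemma kernel_op_cond_exp_kernel: "bop M T \<Longrightarrow> f \<in> L2 M \<Longrightarrow>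
    ae_eq M (kernel_op M (cond_exp_kernel T) f) (T (cond_exp_fibres M key f))"
  by (simp only: kernel_op_cond_exp_kernel_eq_finite_rank)
     (rule ae_eq_sym[OF bop_cond_exp_fibres_eq_finite_rank])

end
context finite_fibres
begin

lemma l2norm_cond_exp_fibres_sub_le: assumes f: "f \<in> L2 M" and g: "g \<in> L2 M" and hfix: "ae_eq M (cond_exp_fibres M key g) g"
  shows "l2norm M (\<lambda>x. cond_exp_fibres M key f x - f x) \<le> 2 * l2norm M (\<lambda>x. f x - g x)"
proof -
  have fg: "(\<lambda>x. f x - g x) \<in> L2 M" using f g by (rule L2_diff)
  have gf: "(\<lambda>x. g x - f x) \<in> L2 M" using g f by (rule L2_diff)
  have E1: "cond_exp_fibres M key (\<lambda>x. f x - g x) \<in> L2 M" by (rule L2_cond_exp_fibres)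
  have ae: "ae_eq M (\<lambda>x. cond_exp_fibres M key f x - f x) (\<lambda>x. cond_exp_fibres M key (\<lambda>x. f x - g x) x + (g x - f x))"
    using hfix unfolding cond_exp_fibres_diff[OF f g] ae_eq_def by (rule AE_mp) (auto intro!: AE_I2)
  have "l2norm M (\<lambda>x. cond_exp_fibres M key f x - f x) = l2norm M (\<lambda>x. cond_exp_fibres M key (\<lambda>x. f x - g x) x + (g x - f x))"
    by (rule l2norm_cong_ae[OF L2_diff[OF L2_cond_exp_fibres f] L2_add[OF E1 gf] ae])
  also have "\<dots> \<le> l2norm M (cond_exp_fibres M key (\<lambda>x. f x - g x)) + l2norm M (\<lambda>x. g x - f x)"
    by (rule l2norm_triangle[OF E1 gf])
  also have "\<dots> \<le> l2norm M (\<lambda>x. f x - g x) + l2norm M (\<lambda>x. f x - g x)"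
    using l2norm_cond_exp_fibres_le[OF fg] l2norm_minus_commute[of g f] by simp
  finally show ?thesis by simp
qed

end

definition joint_key :: "(nat \<Rightarrow> nat \<Rightarrow> 'a \<Rightarrow> complex) \<Rightarrow> nat \<Rightarrow> 'a \<Rightarrow> nat \<times> nat \<Rightarrow> complex" where
  "joint_key s m x = (\<lambda>p. if p \<in> {..m} \<times> {..m} then s (fst p) (snd p) x else 0)"

context finite_measure
begin

text \<open>The fibres of joint_key s m form the common refinement of the level sets of the
  functions s n k with n, k \<le> m.\<close>

lemma finite_fibres_joint_key:
  assumes sp: "space M = UNIV" and s: "\<And>n k. simple_function M (s n k)"
  shows "finite_fibres M (joint_key s m)"
proof
  let ?I = "{..m} \<times> {..m}"
  have fr: "finite (range (s n k))" for n k using simple_functionD(1)[OF s[of n k]] sp by simp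
  have "range (joint_key s m) \<subseteq> (\<lambda>\<psi> p. if p \<in> ?I then \<psi> p else 0) ` (\<Pi>\<^sub>E p\<in>?I. range (s (fst p) (snd p)))"
  proof
    fix \<phi> assume "\<phi> \<in> range (joint_key s m)"
    then obtain x where x: "\<phi> = joint_key s m x" by auto
    show "\<phi> \<in> (\<lambda>\<psi> p. if p \<in> ?I then \<psi> p else 0) ` (\<Pi>\<^sub>E p\<in>?I. range (s (fst p) (snd p)))"
      by (rule image_eqI[of _ _ "restrict (\<lambda>p. s (fst p) (snd p) x) ?I"]) (auto simp: x joint_key_def)
  qed
  moreover have "finite (\<Pi>\<^sub>E p\<in>?I. range (s (fst p) (snd p)))" by (intro finite_PiE fr) auto
  ultimately show "finite (range (joint_key s m))" by (rule finite_subset[OF _ finite_imageI])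
  fix \<phi>
  have eq: "joint_key s m -` {\<phi>} =
      (if (\<forall>p. p \<notin> ?I \<longrightarrow> \<phi> p = 0) then (\<Inter>p\<in>?I. s (fst p) (snd p) -` {\<phi> p}) else {})"
    by (auto simp: joint_key_def fun_eq_iff split: if_splits)
  have "s (fst p) (snd p) -` {\<phi> p} \<in> sets M" for p
    using simple_functionD(2)[OF s[of "fst p" "snd p"], of "{\<phi> p}"] sp by simp
  then show "joint_key s m -` {\<phi>} \<in> sets M"
    unfolding eq by (auto intro!: countable_Un_Int(2))
qed

lemma simple_function_approx_L2:
  assumes u: "u \<in> L2 M" and s: "\<And>k. simple_function M (s k)" and lim: "\<And>x. (\<lambda>k. s k x) \<longlonglongrightarrow> u x"
    and bnd: "\<And>k x. cmod (s k x) \<le> 2 * cmod (u x)"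
  shows "\<And>k. s k \<in> L2 M" and "(\<lambda>k. l2norm M (\<lambda>x. s k x - u x)) \<longlonglongrightarrow> 0"
proof -
  have [measurable]: "u \<in> borel_measurable M" using u by (rule L2_D)
  have sm[measurable]: "s k \<in> borel_measurable M" for k using s by (rule borel_measurable_simple_function)
  show "s k \<in> L2 M" for k by (rule L2_dominated[OF sm u bnd])
  have "(\<lambda>k. LINT x|M. (cmod (s k x - u x))\<^sup>2) \<longlonglongrightarrow> (LINT x|M. 0)"
  proof (rule integral_dominated_convergence[where w="\<lambda>x. 9 * (cmod (u x))\<^sup>2"])
    show "integrable M (\<lambda>x. 9 * (cmod (u x))\<^sup>2)" using L2_D(2)[OF u] by simp
    show "AE x in M. (\<lambda>k. (cmod (s k x - u x))\<^sup>2) \<longlonglongrightarrow> 0"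
    proof (rule AE_I2)
      fix x
      have "(\<lambda>k. s k x - u x) \<longlonglongrightarrow> u x - u x" by (intro tendsto_diff lim tendsto_const)
      then have "(\<lambda>k. cmod (s k x - u x)) \<longlonglongrightarrow> 0" using tendsto_norm by fastforce
      then show "(\<lambda>k. (cmod (s k x - u x))\<^sup>2) \<longlonglongrightarrow> 0" using tendsto_power[of _ 0 sequentially 2] by fastforce
    qed
    fix k
    show "AE x in M. norm ((cmod (s k x - u x))\<^sup>2) \<le> 9 * (cmod (u x))\<^sup>2"
    proof (rule AE_I2)
      fix x
      have "cmod (s k x - u x) \<le> cmod (s k x) + cmod (u x)" by (rule norm_triangle_ineq4)
      also have "\<dots> \<le> 3 * cmod (u x)" using bnd[of k x] by simp
      finally have "(cmod (s k x - u x))\<^sup>2 \<le> (3 * cmod (u x))\<^sup>2" by (rule power_mono) simp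
      then show "norm ((cmod (s k x - u x))\<^sup>2) \<le> 9 * (cmod (u x))\<^sup>2" by (simp add: power_mult_distrib)
    qed
  qed measurable
  then have "(\<lambda>k. sqrt (LINT x|M. (cmod (s k x - u x))\<^sup>2)) \<longlonglongrightarrow> sqrt 0"
    by (intro tendsto_real_sqrt) simp
  then show "(\<lambda>k. l2norm M (\<lambda>x. s k x - u x)) \<longlonglongrightarrow> 0" by (simp add: l2norm_def)
qed

lemma exists_keys_cond_exp_fibres_tendsto:
  fixes u :: "nat \<Rightarrow> 'a \<Rightarrow> complex"
  assumes sp: "space M = UNIV" and u: "\<And>n. u n \<in> L2 M"
  shows "\<exists>key :: nat \<Rightarrow> 'a \<Rightarrow> nat \<times> nat \<Rightarrow> complex. (\<forall>m. finite_fibres M (key m)) \<and>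
     (\<forall>n. (\<lambda>m. l2norm M (\<lambda>x. cond_exp_fibres M (key m) (u n) x - u n x)) \<longlonglongrightarrow> 0)"
proof -
  have "\<forall>n. \<exists>F. (\<forall>i. simple_function M (F i)) \<and> (\<forall>x\<in>space M. (\<lambda>i. F i x) \<longlonglongrightarrow> u n x) \<and>
    (\<forall>i. \<forall>x\<in>space M. dist (F i x) 0 \<le> 2 * dist (u n x) 0)"
    using borel_measurable_implies_sequence_metric L2_D(1)[OF u] by blast
  from choice[OF this] obtain s where S: "\<forall>n. (\<forall>i. simple_function M (s n i)) \<and> (\<forall>x\<in>space M. (\<lambda>i. s n i x) \<longlonglongrightarrow> u n x) \<and>
    (\<forall>i. \<forall>x\<in>space M. dist (s n i x) 0 \<le> 2 * dist (u n x) 0)"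
    by blast
  have s: "\<And>n i. simple_function M (s n i)"
    "\<And>n x. (\<lambda>i. s n i x) \<longlonglongrightarrow> u n x" "\<And>n i x. cmod (s n i x) \<le> 2 * cmod (u n x)"
    using S sp by auto
  note sL = simple_function_approx_L2(1)[OF u s(1) s(2) s(3)]
  note sconv = simple_function_approx_L2(2)[OF u s(1) s(2) s(3)]
  have kc: "finite_fibres M (joint_key s m)" for m by (rule finite_fibres_joint_key[OF sp s(1)])
  have "(\<lambda>m. l2norm M (\<lambda>x. cond_exp_fibres M (joint_key s m) (u n) x - u n x)) \<longlonglongrightarrow> 0" for n
  proof (rule LIMSEQ_I)
    fix r :: real assume r: "0 < r"
    obtain K where K: "l2norm M (\<lambda>x. s n K x - u n x) < r / 2"
      using LIMSEQ_D[OF sconv[of n], of "r/2"] r by auto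
    have "l2norm M (\<lambda>x. cond_exp_fibres M (joint_key s m) (u n) x - u n x) < r" if m: "max n K \<le> m" for m
    proof -
      interpret kc: finite_fibres M "joint_key s m" by (rule kc)
      have "ae_eq M (cond_exp_fibres M (joint_key s m) (s n K)) (s n K)"
        by (rule kc.cond_exp_fibres_fixes[OF sL, of _ _ "\<lambda>\<phi>. \<phi> (n, K)"]) (use m in \<open>auto simp: joint_key_def\<close>)
      then have "l2norm M (\<lambda>x. cond_exp_fibres M (joint_key s m) (u n) x - u n x) \<le> 2 * l2norm M (\<lambda>x. u n x - s n K x)"
        by (rule kc.l2norm_cond_exp_fibres_sub_le[OF u sL])
      also have "\<dots> < r" using K by (simp add: l2norm_minus_commute)
      finally show ?thesis .
    qed
    then show "\<exists>no. \<forall>m\<ge>no. norm (l2norm M (\<lambda>x. cond_exp_fibres M (joint_key s m) (u n) x - u n x) - 0) < r"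
      by (intro exI[of _ "max n K"]) simp
  qed
  then show ?thesis using kc by blast
qed

lemma tc_pairD: assumes "tc_pair M \<xi> \<eta>"
  shows "\<And>n. \<xi> n \<in> L2 M" "\<And>n. \<eta> n \<in> L2 M" "summable (\<lambda>n. (l2norm M (\<xi> n))\<^sup>2)" "summable (\<lambda>n. (l2norm M (\<eta> n))\<^sup>2)"
  using assms by (auto simp: tc_pair_def)

lemma cmod_l2inner_bop_le: assumes T: "bop M T" and "g \<in> L2 M" "h \<in> L2 M"
  shows "cmod (l2inner M (T g) h) \<le> opnorm M T * l2norm M g * l2norm M h"
proof -
  have "cmod (l2inner M (T g) h) \<le> l2norm M (T g) * l2norm M h"
    by (rule l2inner_bound[OF bop_L2[OF assms(1,2)] assms(3)])
  also have "\<dots> \<le> opnorm M T * l2norm M g * l2norm M h"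
    by (rule mult_right_mono[OF l2norm_bop_le[OF assms(1,2)]]) simp
  finally show ?thesis .
qed

lemma l2inner_bop_tendsto:
  assumes T: "bop M T" and g: "\<And>m. g m \<in> L2 M" "g0 \<in> L2 M" and h: "h \<in> L2 M"
    and lim: "(\<lambda>m. l2norm M (\<lambda>x. g m x - g0 x)) \<longlonglongrightarrow> 0"
  shows "(\<lambda>m. l2inner M (T (g m)) h) \<longlonglongrightarrow> l2inner M (T g0) h"
proof -
  have d: "(\<lambda>x. g m x - g0 x) \<in> L2 M" for m by (rule L2_diff[OF g])
  have "l2inner M (T (g m)) h - l2inner M (T g0) h = l2inner M (T (\<lambda>x. g m x - g0 x)) h" for m
  proof -
    have "l2inner M (T (g m)) h - l2inner M (T g0) h = l2inner M (\<lambda>x. T (g m) x - T g0 x) h"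
      by (rule l2inner_diff_left[OF bop_L2[OF T g(1)] bop_L2[OF T g(2)] h, symmetric])
    also have "\<dots> = l2inner M (T (\<lambda>x. g m x - g0 x)) h"
      by (rule l2inner_cong_ae[OF L2_diff[OF bop_L2[OF T g(1)] bop_L2[OF T g(2)]] bop_L2[OF T d] h
            ae_eq_sym[OF bop_diff[OF T g]]])
    finally show ?thesis .
  qed
  then have bound: "norm (l2inner M (T (g m)) h - l2inner M (T g0) h)
      \<le> opnorm M T * l2norm M (\<lambda>x. g m x - g0 x) * l2norm M h" for m
    using cmod_l2inner_bop_le[OF T d h, of m] by simp
  have z: "(\<lambda>m. opnorm M T * l2norm M (\<lambda>x. g m x - g0 x) * l2norm M h) \<longlonglongrightarrow> 0"
    by (rule tendsto_mult_left_zero[OF tendsto_mult_right_zero[OF lim]])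
  have "(\<lambda>m. l2inner M (T (g m)) h - l2inner M (T g0) h) \<longlonglongrightarrow> 0"
    by (rule Lim_null_comparison[OF always_eventually z]) (use bound in blast)
  then show ?thesis by (simp add: LIM_zero_iff)
qed

lemma tc_fun_tendsto_contractions:
  assumes tc: "tc_pair M \<xi> \<eta>" and T: "bop M T"
    and GL: "\<And>m n. G m (\<xi> n) \<in> L2 M" and Gn: "\<And>m n. l2norm M (G m (\<xi> n)) \<le> l2norm M (\<xi> n)"
    and Gc: "\<And>n. (\<lambda>m. l2norm M (\<lambda>x. G m (\<xi> n) x - \<xi> n x)) \<longlonglongrightarrow> 0"
  shows "(\<lambda>m. \<Sum>n. l2inner M (T (G m (\<xi> n))) (\<eta> n)) \<longlonglongrightarrow> (\<Sum>n. l2inner M (T (\<xi> n)) (\<eta> n))"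
proof -
  note td = tc_pairD[OF tc]
  let ?C = "opnorm M T"
  let ?B = "\<lambda>k. ?C * ((l2norm M (\<xi> k))\<^sup>2 + (l2norm M (\<eta> k))\<^sup>2)"
  have bound: "norm (l2inner M (T (G m (\<xi> k))) (\<eta> k)) \<le> ?B k" for k m
  proof -
    have "norm (l2inner M (T (G m (\<xi> k))) (\<eta> k)) \<le> ?C * l2norm M (G m (\<xi> k)) * l2norm M (\<eta> k)"
      by (rule cmod_l2inner_bop_le[OF T GL td(2)])
    also have "\<dots> \<le> ?C * (l2norm M (\<xi> k) * l2norm M (\<eta> k))"
      using Gn[of m k] opnorm_nonneg[OF T] by (simp add: mult.assoc mult_left_mono mult_right_mono)
    also have "\<dots> \<le> ?B k"
    proof (rule mult_left_mono[OF _ opnorm_nonneg[OF T]])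
      have "0 \<le> l2norm M (\<xi> k) * l2norm M (\<eta> k)" by simp
      then show "l2norm M (\<xi> k) * l2norm M (\<eta> k) \<le> (l2norm M (\<xi> k))\<^sup>2 + (l2norm M (\<eta> k))\<^sup>2"
        using sum_squares_bound[of "l2norm M (\<xi> k)" "l2norm M (\<eta> k)"] by linarith
    qed
    finally show ?thesis .
  qed
  have "eventually (\<lambda>m. summable (\<lambda>k. norm (l2inner M (T (G m (\<xi> k))) (\<eta> k)))) sequentially \<and>
        summable (\<lambda>k. norm (l2inner M (T (\<xi> k)) (\<eta> k))) \<and>
        ((\<lambda>m. \<Sum>k. l2inner M (T (G m (\<xi> k))) (\<eta> k)) \<longlonglongrightarrow> (\<Sum>k. l2inner M (T (\<xi> k)) (\<eta> k)))"
  proof (rule tannerys_theorem[where a="\<lambda>k m. l2inner M (T (G m (\<xi> k))) (\<eta> k)"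
      and b="\<lambda>k. l2inner M (T (\<xi> k)) (\<eta> k)" and F=sequentially and M="?B"])
    show "(\<lambda>m. l2inner M (T (G m (\<xi> k))) (\<eta> k)) \<longlonglongrightarrow> l2inner M (T (\<xi> k)) (\<eta> k)" for k
      by (rule l2inner_bop_tendsto[OF T GL td(1) td(2) Gc])
    show "summable ?B"
      using summable_add[OF td(3) td(4)] by (rule summable_mult)
    show "\<forall>\<^sub>F (k, m) in at_top \<times>\<^sub>F sequentially. norm (l2inner M (T (G m (\<xi> k))) (\<eta> k)) \<le> ?B k"
      by (rule always_eventually) (simp add: split_beta bound)
  qed simp
  then show ?thesis by blast
qed

end

lemma indicator_compression_kernel_op:
  "mult_op (indicator A) \<circ> kernel_op M k \<circ> mult_op (indicator B) = kernel_op M (\<lambda>p. indicator (A \<times> B) p * k p)"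
proof (intro ext)
  fix f s
  have "(LINT t|M. indicator (A \<times> B) (s, t) * k (s, t) * f t) = (LINT t|M. indicator A s * (k (s, t) * (indicator B t * f t)))"
    by (intro Bochner_Integration.integral_cong) (auto simp: indicator_def)
  also have "\<dots> = indicator A s * (LINT t|M. k (s, t) * (indicator B t * f t))" by simp
  finally show "(mult_op (indicator A) \<circ> kernel_op M k \<circ> mult_op (indicator B)) f s =
      kernel_op M (\<lambda>p. indicator (A \<times> B) p * k p) f s"
    by (simp add: mult_op_def kernel_op_def)
qed

section \<open>Normal maps are determined by their values on Hilbert--Schmidt operators\<close>

definition single_seq :: "('a \<Rightarrow> complex) \<Rightarrow> nat \<Rightarrow> 'a \<Rightarrow> complex" where
  "single_seq g = (\<lambda>n. if n = 0 then g else (\<lambda>x. 0))"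

definition normal_opmap :: "'a measure \<Rightarrow> 'a opmap \<Rightarrow> bool" where
  "normal_opmap M \<Psi> \<longleftrightarrow> (\<forall>T. bop M T \<longrightarrow> bop M (\<Psi> T)) \<and>
     (\<forall>\<xi> \<eta>. tc_pair M \<xi> \<eta> \<longrightarrow> (\<exists>\<xi>' \<eta>'. tc_pair M \<xi>' \<eta>' \<and>
        (\<forall>T. bop M T \<longrightarrow> tc_fun M \<xi> \<eta> (\<Psi> T) = tc_fun M \<xi>' \<eta>' T)))"

lemma normal_opmap_bop: "normal_opmap M \<Psi> \<Longrightarrow> bop M T \<Longrightarrow> bop M (\<Psi> T)"
  by (simp add: normal_opmap_def)

lemma normal_opmapD:
  "normal_opmap M \<Psi> \<Longrightarrow> tc_pair M \<xi> \<eta> \<Longrightarrow>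
    \<exists>\<xi>' \<eta>'. tc_pair M \<xi>' \<eta>' \<and> (\<forall>T. bop M T \<longrightarrow> tc_fun M \<xi> \<eta> (\<Psi> T) = tc_fun M \<xi>' \<eta>' T)"
  by (simp add: normal_opmap_def)

lemma NCB_D_normal_opmap: "NCB_D M \<Phi> \<Longrightarrow> normal_opmap M \<Phi>"
  by (simp add: NCB_D_def normal_opmap_def)

lemma normal_opmap_zero: "normal_opmap M (\<lambda>T f x. 0)"
  unfolding normal_opmap_def
  by (intro conjI allI impI bop_zero_op exI[of _ "\<lambda>n x. 0"])
     (auto simp: tc_pair_def tc_fun_def l2inner_def)

context finite_measure
begin

lemma tc_fun_single: "tc_fun M (single_seq g) (single_seq h) S = l2inner M (S g) h"
proof -
  have "(\<lambda>n. l2inner M (S (single_seq g n)) (single_seq h n)) = (\<lambda>n. if n = 0 then l2inner M (S g) h else 0)"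
    by (auto simp: single_seq_def l2inner_def)
  then show ?thesis unfolding tc_fun_def using sums_unique[OF sums_single[of 0 "\<lambda>_. l2inner M (S g) h"]]
    by simp
qed

lemma tc_pair_single: assumes "g \<in> L2 M" "h \<in> L2 M" shows "tc_pair M (single_seq g) (single_seq h)"
proof -
  have "(\<lambda>n. (l2norm M (single_seq f n))\<^sup>2) = (\<lambda>n. if n = 0 then (l2norm M f)\<^sup>2 else 0)" for f
    by (auto simp: single_seq_def)
  then have "summable (\<lambda>n. (l2norm M (single_seq f n))\<^sup>2)" for f
    using sums_single[of 0 "\<lambda>_. (l2norm M f)\<^sup>2"] by (simp add: sums_iff)
  then show ?thesis unfolding tc_pair_def using assms by (auto simp: single_seq_def)
qed

lemma normal_opmap_compression:
  assumes \<Phi>: "normal_opmap M \<Phi>" and A: "A \<in> sets M" and B: "B \<in> sets M"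
  shows "normal_opmap M (\<lambda>T. \<Phi> (mult_op (indicator A) \<circ> T \<circ> mult_op (indicator B)))"
  unfolding normal_opmap_def
proof (intro conjI allI impI)
  show "bop M (\<Phi> (mult_op (indicator A) \<circ> T \<circ> mult_op (indicator B)))" if "bop M T" for T
    by (rule normal_opmap_bop[OF \<Phi> bop_indicator_compression[OF that A B]])
  fix \<xi> \<eta> assume "tc_pair M \<xi> \<eta>"
  then obtain \<xi>' \<eta>' where tc': "tc_pair M \<xi>' \<eta>'"
    and eq: "\<And>T. bop M T \<Longrightarrow> tc_fun M \<xi> \<eta> (\<Phi> T) = tc_fun M \<xi>' \<eta>' T"
    using normal_opmapD[OF \<Phi>] by blast
  note td = tc_pairD[OF tc']
  let ?\<xi> = "\<lambda>n x. indicator B x * \<xi>' n x" and ?\<eta> = "\<lambda>n x. indicator A x * \<eta>' n x"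
  have sq: "(l2norm M (\<lambda>x. indicator S x * g x))\<^sup>2 \<le> (l2norm M g)\<^sup>2" if "g \<in> L2 M" "S \<in> sets M" for g S
    by (intro power_mono l2norm_mult_indicator_le that) simp
  have "tc_pair M ?\<xi> ?\<eta>"
    unfolding tc_pair_def
  proof (intro conjI allI)
    show "?\<xi> n \<in> L2 M" "?\<eta> n \<in> L2 M" for n
      by (intro L2_mult_indicator A B td)+
    show "summable (\<lambda>n. (l2norm M (?\<xi> n))\<^sup>2)"
      by (rule summable_comparison_test'[OF td(3), of 0]) (simp add: sq[OF td(1) B])
    show "summable (\<lambda>n. (l2norm M (?\<eta> n))\<^sup>2)"
      by (rule summable_comparison_test'[OF td(4), of 0]) (simp add: sq[OF td(2) A])
  qed
  moreover have "tc_fun M \<xi> \<eta> (\<Phi> (mult_op (indicator A) \<circ> T \<circ> mult_op (indicator B))) = tc_fun M ?\<xi> ?\<eta> T"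
    if T: "bop M T" for T
  proof -
    have "tc_fun M \<xi> \<eta> (\<Phi> (mult_op (indicator A) \<circ> T \<circ> mult_op (indicator B)))
        = tc_fun M \<xi>' \<eta>' (mult_op (indicator A) \<circ> T \<circ> mult_op (indicator B))"
      by (rule eq[OF bop_indicator_compression[OF T A B]])
    also have "\<dots> = tc_fun M ?\<xi> ?\<eta> T"
      unfolding tc_fun_def l2inner_def
      by (intro suminf_cong Bochner_Integration.integral_cong) (auto simp: mult_op_def)
    finally show ?thesis .
  qed
  ultimately show "\<exists>\<xi>' \<eta>'. tc_pair M \<xi>' \<eta>' \<and> (\<forall>T. bop M T \<longrightarrow>
      tc_fun M \<xi> \<eta> (\<Phi> (mult_op (indicator A) \<circ> T \<circ> mult_op (indicator B))) = tc_fun M \<xi>' \<eta>' T)"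
    by blast
qed

lemma tc_fun_kernel_cond_exp_tendsto:
  assumes kc: "\<And>m. finite_fibres M (key m)" and tc: "tc_pair M \<xi> \<eta>" and T: "bop M T"
    and cv: "\<And>n. (\<lambda>m. l2norm M (\<lambda>x. cond_exp_fibres M (key m) (\<xi> n) x - \<xi> n x)) \<longlonglongrightarrow> 0"
  shows "(\<lambda>m. tc_fun M \<xi> \<eta> (kernel_op M (finite_fibres.cond_exp_kernel M (key m) T))) \<longlonglongrightarrow> tc_fun M \<xi> \<eta> T"
proof -
  note td = tc_pairD[OF tc]
  have "tc_fun M \<xi> \<eta> (kernel_op M (finite_fibres.cond_exp_kernel M (key m) T))
      = (\<Sum>n. l2inner M (T (cond_exp_fibres M (key m) (\<xi> n))) (\<eta> n))" for m
  proof -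
    interpret kc: finite_fibres M "key m" by (rule kc)
    have "l2inner M (kernel_op M (kc.cond_exp_kernel T) (\<xi> n)) (\<eta> n)
        = l2inner M (T (cond_exp_fibres M (key m) (\<xi> n))) (\<eta> n)" for n
      by (rule l2inner_cong_ae[OF bop_L2[OF kc.bop_kernel_op_cond_exp_kernel[OF T] td(1)]
            bop_L2[OF T kc.L2_cond_exp_fibres] td(2) kc.kernel_op_cond_exp_kernel[OF T td(1)]])
    then show ?thesis unfolding tc_fun_def by simp
  qed
  moreover have "(\<lambda>m. \<Sum>n. l2inner M (T (cond_exp_fibres M (key m) (\<xi> n))) (\<eta> n)) \<longlonglongrightarrow> tc_fun M \<xi> \<eta> T"
    unfolding tc_fun_def
  proof (rule tc_fun_tendsto_contractions[OF tc T _ _ cv])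
    fix m n
    interpret kc: finite_fibres M "key m" by (rule kc)
    show "cond_exp_fibres M (key m) (\<xi> n) \<in> L2 M" by (rule kc.L2_cond_exp_fibres)
    show "l2norm M (cond_exp_fibres M (key m) (\<xi> n)) \<le> l2norm M (\<xi> n)"
      by (rule kc.l2norm_cond_exp_fibres_le[OF td(1)])
  qed
  ultimately show ?thesis by simp
qed

text \<open>Interleaving \<xi>1 and \<xi>2 into one sequence u gives a single sequence of partitions that
  serves both functionals.\<close>

lemma tc_fun_eq_if_eq_on_kernel_ops:
  assumes sp: "space M = UNIV" and tc1: "tc_pair M \<xi>1 \<eta>1" and tc2: "tc_pair M \<xi>2 \<eta>2"
    and eq: "\<And>k. k \<in> L2 (M \<Otimes>\<^sub>M M) \<Longrightarrow> bop M (kernel_op M k) \<Longrightarrow>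
        tc_fun M \<xi>1 \<eta>1 (kernel_op M k) = tc_fun M \<xi>2 \<eta>2 (kernel_op M k)"
    and T: "bop M T"
  shows "tc_fun M \<xi>1 \<eta>1 T = tc_fun M \<xi>2 \<eta>2 T"
proof -
  define u where "u n = (if even n then \<xi>1 (n div 2) else \<xi>2 (n div 2))" for n
  have "u n \<in> L2 M" for n using tc_pairD(1)[OF tc1] tc_pairD(1)[OF tc2] by (simp add: u_def)
  then obtain key :: "nat \<Rightarrow> 'a \<Rightarrow> nat \<times> nat \<Rightarrow> complex" where kc: "\<And>m. finite_fibres M (key m)"
    and conv: "\<And>n. (\<lambda>m. l2norm M (\<lambda>x. cond_exp_fibres M (key m) (u n) x - u n x)) \<longlonglongrightarrow> 0"
    using exists_keys_cond_exp_fibres_tendsto[OF sp] by blast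
  have "u (2 * n) = \<xi>1 n" and "u (Suc (2 * n)) = \<xi>2 n" for n by (simp_all add: u_def)
  then have lim1: "(\<lambda>m. tc_fun M \<xi>1 \<eta>1 (kernel_op M (finite_fibres.cond_exp_kernel M (key m) T))) \<longlonglongrightarrow> tc_fun M \<xi>1 \<eta>1 T"
    and lim2: "(\<lambda>m. tc_fun M \<xi>2 \<eta>2 (kernel_op M (finite_fibres.cond_exp_kernel M (key m) T))) \<longlonglongrightarrow> tc_fun M \<xi>2 \<eta>2 T"
    using conv[of "2 * _"] conv[of "Suc (2 * _)"]
    by (auto intro!: tc_fun_kernel_cond_exp_tendsto[OF kc _ T] tc1 tc2)
  have "tc_fun M \<xi>1 \<eta>1 (kernel_op M (finite_fibres.cond_exp_kernel M (key m) T))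
      = tc_fun M \<xi>2 \<eta>2 (kernel_op M (finite_fibres.cond_exp_kernel M (key m) T))" for m
    using finite_fibres.L2_cond_exp_kernel[OF kc T] finite_fibres.bop_kernel_op_cond_exp_kernel[OF kc T]
    by (rule eq)
  with lim1 have "(\<lambda>m. tc_fun M \<xi>2 \<eta>2 (kernel_op M (finite_fibres.cond_exp_kernel M (key m) T))) \<longlonglongrightarrow> tc_fun M \<xi>1 \<eta>1 T"
    by simp
  from LIMSEQ_unique[OF this lim2] show ?thesis .
qed

lemma normal_opmap_eq_if_eq_on_kernel_ops:
  assumes sp: "space M = UNIV" and \<Psi>1: "normal_opmap M \<Psi>1" and \<Psi>2: "normal_opmap M \<Psi>2"
    and eq: "\<And>k. k \<in> L2 (M \<Otimes>\<^sub>M M) \<Longrightarrow> op_eq M (\<Psi>1 (kernel_op M k)) (\<Psi>2 (kernel_op M k))"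
    and T: "bop M T"
  shows "op_eq M (\<Psi>1 T) (\<Psi>2 T)"
  unfolding op_eq_def
proof
  fix f assume f: "f \<in> L2 M"
  have L1: "\<Psi>1 T f \<in> L2 M" by (rule bop_L2[OF normal_opmap_bop[OF \<Psi>1 T] f])
  have L2': "\<Psi>2 T f \<in> L2 M" by (rule bop_L2[OF normal_opmap_bop[OF \<Psi>2 T] f])
  define d where "d = (\<lambda>x. \<Psi>1 T f x - \<Psi>2 T f x)"
  have d: "d \<in> L2 M" unfolding d_def by (rule L2_diff[OF L1 L2'])
  have tc: "tc_pair M (single_seq f) (single_seq d)" by (rule tc_pair_single[OF f d])
  obtain \<xi>1 \<eta>1 where tc1: "tc_pair M \<xi>1 \<eta>1"
    and e1: "\<And>S. bop M S \<Longrightarrow> l2inner M (\<Psi>1 S f) d = tc_fun M \<xi>1 \<eta>1 S"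
    using normal_opmapD[OF \<Psi>1 tc] by (auto simp: tc_fun_single)
  obtain \<xi>2 \<eta>2 where tc2: "tc_pair M \<xi>2 \<eta>2"
    and e2: "\<And>S. bop M S \<Longrightarrow> l2inner M (\<Psi>2 S f) d = tc_fun M \<xi>2 \<eta>2 S"
    using normal_opmapD[OF \<Psi>2 tc] by (auto simp: tc_fun_single)
  have "tc_fun M \<xi>1 \<eta>1 T = tc_fun M \<xi>2 \<eta>2 T"
  proof (rule tc_fun_eq_if_eq_on_kernel_ops[OF sp tc1 tc2 _ T])
    fix k assume k: "k \<in> L2 (M \<Otimes>\<^sub>M M)" and K: "bop M (kernel_op M k)"
    have "l2inner M (\<Psi>1 (kernel_op M k) f) d = l2inner M (\<Psi>2 (kernel_op M k) f) d"
      using eq[OF k] f unfolding op_eq_def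
      by (intro l2inner_cong_ae bop_L2[OF normal_opmap_bop[OF \<Psi>1 K] f] bop_L2[OF normal_opmap_bop[OF \<Psi>2 K] f] d)
         auto
    then show "tc_fun M \<xi>1 \<eta>1 (kernel_op M k) = tc_fun M \<xi>2 \<eta>2 (kernel_op M k)"
      using e1[OF K] e2[OF K] by simp
  qed
  then have "l2inner M d d = 0"
    using e1[OF T] e2[OF T] l2inner_diff_left[OF L1 L2' d] by (simp add: d_def)
  then have "AE x in M. d x = 0"
    using l2inner_self[OF d] l2norm_eq_0_iff[OF d] by simp
  then show "ae_eq M (\<Psi>1 T f) (\<Psi>2 T f)" unfolding ae_eq_def d_def by (rule AE_mp) (auto intro!: AE_I2)
qed

lemma compression_eq_if_restricted_symbol:
  assumes sp: "space M = UNIV" and \<Phi>: "NCB_D M \<Phi>" and sym: "has_symbol M \<Phi> \<phi>"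
    and A: "A \<in> sets M" and B: "B \<in> sets M" and \<Psi>: "normal_opmap M \<Psi>"
    and sym\<Psi>: "\<And>k. k \<in> L2 (M \<Otimes>\<^sub>M M) \<Longrightarrow>
        op_eq M (\<Psi> (kernel_op M k)) (kernel_op M (\<lambda>p. indicator (A \<times> B) p * \<phi> p * k p))"
    and T: "bop M T"
  shows "op_eq M (\<Psi> T) (mult_op (indicator A) \<circ> \<Phi> T \<circ> mult_op (indicator B))"
proof -
  let ?\<Psi>' = "\<lambda>T. \<Phi> (mult_op (indicator A) \<circ> T \<circ> mult_op (indicator B))"
  have "op_eq M (\<Psi> (kernel_op M k)) (?\<Psi>' (kernel_op M k))" if k: "k \<in> L2 (M \<Otimes>\<^sub>M M)" for k
  proof -
    have "(\<lambda>p. indicator (A \<times> B) p * k p) \<in> L2 (M \<Otimes>\<^sub>M M)"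
      by (rule L2_mult_indicator[OF _ k]) (use A B in auto)
    then have "op_eq M (?\<Psi>' (kernel_op M k)) (kernel_op M (\<lambda>p. \<phi> p * (indicator (A \<times> B) p * k p)))"
      using sym unfolding has_symbol_def indicator_compression_kernel_op by blast
    moreover have "(\<lambda>p. \<phi> p * (indicator (A \<times> B) p * k p)) = (\<lambda>p. indicator (A \<times> B) p * \<phi> p * k p)"
      by (auto simp: ac_simps)
    ultimately show ?thesis using op_eq_trans[OF sym\<Psi>[OF k] op_eq_sym] by simp
  qed
  then have "op_eq M (\<Psi> T) (?\<Psi>' T)"
    using normal_opmap_eq_if_eq_on_kernel_ops[OF sp \<Psi> normal_opmap_compression[OF NCB_D_normal_opmap[OF \<Phi>] A B] _ T]
    by blast
  moreover have "op_eq M (?\<Psi>' T) (mult_op (indicator A) \<circ> \<Phi> T \<circ> mult_op (indicator B))"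
    by (rule NCB_D_bimodule[OF \<Phi> indicator_Linf[OF A] indicator_Linf[OF B] T])
  ultimately show ?thesis by (rule op_eq_trans)
qed

end

section \<open>Block-diagonal operators\<close>

context finite_measure
begin

lemma l2norm_sq_partition:
  assumes h: "h \<in> L2 M" and R: "\<And>i. R i \<in> sets M" "disjoint_family R" "(\<Union>i. R i) = UNIV"
  shows "ennreal ((l2norm M h)\<^sup>2) = (\<Sum>i. ennreal ((l2norm M (\<lambda>x. indicator (R i) x * h x))\<^sup>2))"
proof -
  have [measurable]: "h \<in> borel_measurable M" using h by (rule L2_D)
  have "ennreal ((l2norm M h)\<^sup>2) = (\<integral>\<^sup>+x. (\<Sum>i. indicator (R i) x * ennreal ((cmod (h x))\<^sup>2)) \<partial>M)"
    using nn_integral_cmod_sq_L2[OF h] suminf_indicator[OF R(2)] R(3) by simp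
  also have "\<dots> = (\<Sum>i. \<integral>\<^sup>+x. indicator (R i) x * ennreal ((cmod (h x))\<^sup>2) \<partial>M)"
    by (rule nn_integral_suminf) (use R(1) in measurable)
  also have "\<dots> = (\<Sum>i. ennreal ((l2norm M (\<lambda>x. indicator (R i) x * h x))\<^sup>2))"
    unfolding nn_integral_cmod_sq_L2[OF L2_mult_indicator[OF R(1) h], symmetric]
    by (intro suminf_cong nn_integral_cong) (auto simp: indicator_def)
  finally show ?thesis .
qed

lemma ae_eq_compression_if_off_block_zero:
  assumes sp: "space M = UNIV" and S: "bop M S" and A: "A \<in> sets M" and B: "B \<in> sets M"
    and off: "op_eq M (mult_op (indicator A) \<circ> S \<circ> mult_op (indicator (- B))) (\<lambda>f x. 0)"
    and f: "f \<in> L2 M"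
  shows "ae_eq M (\<lambda>x. indicator A x * S f x) ((mult_op (indicator A) \<circ> S \<circ> mult_op (indicator B)) f)"
proof -
  let ?P = "\<lambda>A h x. indicator A x * h x"
  have B': "- B \<in> sets M" using sets.compl_sets[OF B] sp by (simp add: Compl_eq_Diff_UNIV)
  have "S f = S (\<lambda>x. ?P B f x + ?P (- B) f x)"
    by (rule arg_cong[where f=S]) (auto simp: indicator_def)
  then have "ae_eq M (S f) (\<lambda>x. S (?P B f) x + S (?P (- B) f) x)"
    using bop_add[OF S L2_mult_indicator[OF B f] L2_mult_indicator[OF B' f]] by simp
  moreover have "ae_eq M (\<lambda>x. indicator A x * S (?P (- B) f) x) (\<lambda>x. 0)"
    using off f unfolding op_eq_def by (simp add: mult_op_def)
  ultimately show ?thesis unfolding ae_eq_def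
    by eventually_elim (simp add: mult_op_def distrib_left)
qed

text \<open>Pythagoras over both partitions:
  |S f|^2 = (\<Sum>i. |P_{R i} S P_{C i} f|^2) \<le> s^2 (\<Sum>i. |P_{C i} f|^2) = s^2 |f|^2.\<close>

lemma opnorm_le_block_diagonal:
  assumes sp: "space M = UNIV" and S: "bop M S"
    and R: "\<And>i::nat. R i \<in> sets M" "disjoint_family R" "(\<Union>i. R i) = UNIV"
    and C: "\<And>i::nat. C i \<in> sets M" "disjoint_family C" "(\<Union>i. C i) = UNIV"
    and off: "\<And>i. op_eq M (mult_op (indicator (R i)) \<circ> S \<circ> mult_op (indicator (- C i))) (\<lambda>f x. 0)"
    and block: "\<And>i. opnorm M (mult_op (indicator (R i)) \<circ> S \<circ> mult_op (indicator (C i))) \<le> s"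
    and s: "0 \<le> s"
  shows "opnorm M S \<le> s"
proof (rule opnorm_le)
  fix f assume f: "f \<in> L2 M" and f1: "l2norm M f \<le> 1"
  let ?P = "\<lambda>A h x. indicator A x * h x"
  let ?S = "\<lambda>i. mult_op (indicator (R i)) \<circ> S \<circ> mult_op (indicator (C i))"
  have row: "ae_eq M (?P (R i) (S f)) (?S i f)" for i
    by (rule ae_eq_compression_if_off_block_zero[OF sp S R(1) C(1) off f])
  have "ennreal ((l2norm M (S f))\<^sup>2) = (\<Sum>i. ennreal ((l2norm M (?P (R i) (S f)))\<^sup>2))"
    by (rule l2norm_sq_partition[OF bop_L2[OF S f] R])
  also have "\<dots> = (\<Sum>i. ennreal ((l2norm M (?S i f))\<^sup>2))"
  proof (rule suminf_cong)
    fix i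
    show "ennreal ((l2norm M (?P (R i) (S f)))\<^sup>2) = ennreal ((l2norm M (?S i f))\<^sup>2)"
      using l2norm_cong_ae[OF L2_mult_indicator[OF R(1) bop_L2[OF S f]]
          bop_L2[OF bop_indicator_compression[OF S R(1) C(1)] f] row] by simp
  qed
  also have "\<dots> \<le> (\<Sum>i. ennreal (s\<^sup>2) * ennreal ((l2norm M (?P (C i) f))\<^sup>2))"
  proof (intro suminf_le summableI)
    fix i
    have "?P (C i) (?P (C i) f) = ?P (C i) f" by (auto simp: indicator_def)
    then have "l2norm M (?S i f) = l2norm M (?S i (?P (C i) f))"
      by (simp add: mult_op_def)
    also have "\<dots> \<le> opnorm M (?S i) * l2norm M (?P (C i) f)"
      by (rule l2norm_bop_le[OF bop_indicator_compression[OF S R(1) C(1)] L2_mult_indicator[OF C(1) f]])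
    also have "\<dots> \<le> s * l2norm M (?P (C i) f)"
      by (intro mult_right_mono block) simp
    finally have "(l2norm M (?S i f))\<^sup>2 \<le> (s * l2norm M (?P (C i) f))\<^sup>2"
      by (rule power_mono) simp
    then show "ennreal ((l2norm M (?S i f))\<^sup>2) \<le> ennreal (s\<^sup>2) * ennreal ((l2norm M (?P (C i) f))\<^sup>2)"
      by (simp add: ennreal_mult[symmetric] power_mult_distrib)
  qed
  also have "\<dots> = ennreal ((s * l2norm M f)\<^sup>2)"
    by (simp add: l2norm_sq_partition[OF f C] ennreal_mult power_mult_distrib)
  finally have "l2norm M (S f) \<le> s * l2norm M f"
    by (subst (asm) ennreal_le_iff) (auto intro: power2_le_imp_le simp: s)
  also have "\<dots> \<le> s" using f1 s by (simp add: mult_left_le)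
  finally show "l2norm M (S f) \<le> s" .
qed


lemma mapnorm_le_if_compression:
  assumes \<Phi>: "NCB_D M \<Phi>" and \<Psi>: "NCB_D M \<Psi>" and A: "A \<in> sets M" and B: "B \<in> sets M"
    and eq: "\<And>T. bop M T \<Longrightarrow> op_eq M (\<Psi> T) (mult_op (indicator A) \<circ> \<Phi> T \<circ> mult_op (indicator B))"
  shows "mapnorm M \<Psi> \<le> mapnorm M \<Phi>"
proof (rule mapnorm_le)
  fix T assume T: "bop M T" "opnorm M T \<le> 1"
  have \<Phi>T: "bop M (\<Phi> T)" by (rule NCB_D_bop[OF \<Phi> T(1)])
  have "opnorm M (\<Psi> T) = opnorm M (mult_op (indicator A) \<circ> \<Phi> T \<circ> mult_op (indicator B))"
    by (rule opnorm_cong[OF NCB_D_bop[OF \<Psi> T(1)] bop_indicator_compression[OF \<Phi>T A B] eq[OF T(1)]])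
  also have "\<dots> \<le> opnorm M (\<Phi> T)" by (rule opnorm_indicator_compression_le[OF \<Phi>T A B])
  also have "\<dots> \<le> mapnorm M \<Phi>" by (rule mapnorm_upper[OF \<Phi> T])
  finally show "opnorm M (\<Psi> T) \<le> mapnorm M \<Phi>" .
qed

lemma mapnorm_le_block_diagonal:
  assumes sp: "space M = UNIV" and \<Phi>: "NCB_D M \<Phi>" and \<Phi>j: "\<And>j. NCB_D M (\<Phi>j j)"
    and R: "\<And>i::nat. R i \<in> sets M" "disjoint_family R" "(\<Union>i. R i) = UNIV"
    and C: "\<And>i::nat. C i \<in> sets M" "disjoint_family C" "(\<Union>i. C i) = UNIV"
    and block: "\<And>j T. bop M T \<Longrightarrow>
        op_eq M (\<Phi>j j T) (mult_op (indicator (R j)) \<circ> \<Phi> T \<circ> mult_op (indicator (C j)))"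
    and off: "\<And>j T. bop M T \<Longrightarrow>
        op_eq M (mult_op (indicator (R j)) \<circ> \<Phi> T \<circ> mult_op (indicator (- C j))) (\<lambda>f x. 0)"
    and s: "0 \<le> s" "\<And>j. mapnorm M (\<Phi>j j) \<le> s"
  shows "mapnorm M \<Phi> \<le> s"
proof (rule mapnorm_le)
  fix T assume T: "bop M T" "opnorm M T \<le> 1"
  have \<Phi>T: "bop M (\<Phi> T)" by (rule NCB_D_bop[OF \<Phi> T(1)])
  show "opnorm M (\<Phi> T) \<le> s"
  proof (rule opnorm_le_block_diagonal[OF sp \<Phi>T R C off[OF T(1)] _ s(1)])
    fix j
    have "opnorm M (mult_op (indicator (R j)) \<circ> \<Phi> T \<circ> mult_op (indicator (C j))) = opnorm M (\<Phi>j j T)"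
      by (rule opnorm_cong[OF bop_indicator_compression[OF \<Phi>T R(1) C(1)] NCB_D_bop[OF \<Phi>j T(1)]
            op_eq_sym[OF block[OF T(1)]]])
    also have "\<dots> \<le> mapnorm M (\<Phi>j j)" by (rule mapnorm_upper[OF \<Phi>j T])
    also have "\<dots> \<le> s" by (rule s(2))
    finally show "opnorm M (mult_op (indicator (R j)) \<circ> \<Phi> T \<circ> mult_op (indicator (C j))) \<le> s" .
  qed
qed

end

lemma ereal_eq_SUP_if_least_upper_bound:
  fixes x :: real and a :: "'i \<Rightarrow> real"
  assumes upper: "\<And>j. a j \<le> x" and nonneg: "\<And>j. 0 \<le> a j"
    and least: "\<And>s. 0 \<le> s \<Longrightarrow> (\<And>j. a j \<le> s) \<Longrightarrow> x \<le> s"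
  shows "ereal x = (SUP j. ereal (a j))"
proof (rule antisym)
  show "(SUP j. ereal (a j)) \<le> ereal x" by (rule SUP_least) (simp add: upper)
  show "ereal x \<le> (SUP j. ereal (a j))"
  proof (cases "(SUP j. ereal (a j)) = \<infinity>")
    case False
    let ?S = "SUP j. ereal (a j)"
    have le: "ereal (a j) \<le> ?S" for j by (rule SUP_upper) simp
    have "0 \<le> ?S" using order_trans[OF _ le[of undefined]] nonneg[of undefined] by simp
    with False have fin: "?S = ereal (real_of_ereal ?S)" by (cases ?S) auto
    have "x \<le> real_of_ereal ?S"
    proof (rule least)
      show "0 \<le> real_of_ereal ?S" using \<open>0 \<le> ?S\<close> by (simp add: real_of_ereal_pos)
      show "a j \<le> real_of_ereal ?S" for j using le[of j] by (subst (asm) fin) simp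
    qed
    then show ?thesis by (subst fin) simp
  qed simp
qed

lemma indicator_off_block_mult_eq_0:
  fixes \<phi> :: "'a \<times> 'b \<Rightarrow> complex"
  assumes "disjoint_family R" and "{p. \<phi> p \<noteq> 0} \<subseteq> (\<Union>j. R j \<times> C j)"
  shows "indicator (R i \<times> - C i) p * \<phi> p = 0"
proof (cases "p \<in> R i \<times> - C i \<and> \<phi> p \<noteq> 0")
  case True
  then obtain j where j: "fst p \<in> R j" "snd p \<in> C j" using assms(2) by (cases p) auto
  have "fst p \<in> R i" using True by (cases p) auto
  then have "i = j" using j(1) disjoint_family_onD[OF assms(1), of i j] by auto
  then show ?thesis using True j by (cases p) auto
qed auto

theorem lemma7p1:
  fixes M :: "'a::polish_space measure"
    and \<Phi> :: "'a opmap" and \<phi> :: "'a \<times> 'a \<Rightarrow> complex"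
    and R C :: "nat \<Rightarrow> 'a set" and \<Phi>j :: "nat \<Rightarrow> 'a opmap"
  assumes "sets M = sets borel" and "finite_measure M"
    and "NCB_D M \<Phi>" and "has_symbol M \<Phi> \<phi>"
    and "\<And>j. R j \<in> sets borel" and "disjoint_family R" and "(\<Union>j. R j) = UNIV"
    and "\<And>j. C j \<in> sets borel" and "disjoint_family C" and "(\<Union>j. C j) = UNIV"
    and "{p. \<phi> p \<noteq> 0} \<subseteq> (\<Union>j. R j \<times> C j)"
    and "\<And>j. NCB_D M (\<Phi>j j)"
    and "\<And>j. has_symbol M (\<Phi>j j) (\<lambda>p. indicator (R j \<times> C j) p * \<phi> p)"
  shows "ereal (mapnorm M \<Phi>) = (SUP j. ereal (mapnorm M (\<Phi>j j)))"
proof -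
  interpret finite_measure M by (rule assms(2))
  have sp: "space M = UNIV" using sets_eq_imp_space_eq[OF assms(1)] by simp
  have R: "R j \<in> sets M" and C: "C j \<in> sets M" and C': "- C j \<in> sets M" for j
    using assms(1,5,8) sets.compl_sets[of "C j" M] sp by (simp_all add: Compl_eq_Diff_UNIV)
  have block: "op_eq M (\<Phi>j j T) (mult_op (indicator (R j)) \<circ> \<Phi> T \<circ> mult_op (indicator (C j)))"
    if "bop M T" for j T
    using assms(13)[of j] NCB_D_normal_opmap[OF assms(12)]
    by (intro compression_eq_if_restricted_symbol[OF sp assms(3,4) R C _ _ that]) (auto simp: has_symbol_def)
  have off: "op_eq M (mult_op (indicator (R j)) \<circ> \<Phi> T \<circ> mult_op (indicator (- C j))) (\<lambda>f x. 0)"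
    if "bop M T" for j T
    by (rule op_eq_sym, rule compression_eq_if_restricted_symbol[OF sp assms(3,4) R C' normal_opmap_zero _ that])
       (simp add: op_eq_def kernel_op_def indicator_off_block_mult_eq_0[OF assms(6,11)])
  show ?thesis
  proof (rule ereal_eq_SUP_if_least_upper_bound)
    show "mapnorm M (\<Phi>j j) \<le> mapnorm M \<Phi>" for j
      by (rule mapnorm_le_if_compression[OF assms(3,12) R C block])
    show "0 \<le> mapnorm M (\<Phi>j j)" for j by (rule mapnorm_nonneg[OF assms(12)])
    show "mapnorm M \<Phi> \<le> s" if "0 \<le> s" "\<And>j. mapnorm M (\<Phi>j j) \<le> s" for s
      by (rule mapnorm_le_block_diagonal[OF sp assms(3,12) R assms(6,7) C assms(9,10) block off that])
  qed
qed

end
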